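(* Let $P$ be a partition of $\{1,\dots,n+1\}$ and $P'$ a partition of $\{1,\dots,n'+1\}$ ($n,n'\ge 2$). If the groups $Cox({\cal K}(P))$ and $Cox({\cal K}(P'))$ are isomorphic, then the complexes ${\cal K}(P)$ and ${\cal K}(P')$ are isomorphic.
   Context: For a partition $P=(P_1,\dots,P_t)$ of $\{1,\dots,n+1\}$, ${\cal K}(P)$ is the simplicial complex on the vertex set $\{1,\dots,n+1\}\cup\{p_1,\dots,p_t\}$ ($t$ new vertices) whose $n$-faces are the sets $\{y_1,\dots,y_{n+1}\}$ with, for each $i$, $y_i=i$ or $y_i=p_j$ where $i\in P_j$, subject to the $y_i$ being pairwise distinct; its faces are all nonempty subsets of these. For $i\in\{1,\dots,n+1\}$ with $i\in P_j$, let $g_i$ be the permutation of the vertex set of ${\cal K}(P)$ exchanging $i$ and $p_j$ and fixing all other vertices (an automorphism of ${\cal K}(P)$). $Cox({\cal K}(P))$ is the group generated by $g_1,\dots,g_{n+1}$. Complexes are isomorphic if there is a vertex bijection mapping faces exactly onto faces. *)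

theory Defs
  imports "HOL-Algebra.Algebra" "HOL-Library.Disjoint_Sets" "HOL-Combinatorics.Transposition"
begin

text \<open>Vertices of K(P): Inl i for i in {1..n+1}; Inr B is the new vertex p_B attached
  to the block B of the partition P (blocks serve as labels of the new vertices).\<close>
type_synonym vtx = "nat + nat set"

definition KV :: "nat \<Rightarrow> nat set set \<Rightarrow> vtx set" where
  "KV n P = Inl ` {1..n+1} \<union> Inr ` P"

definition K_facets :: "nat \<Rightarrow> nat set set \<Rightarrow> vtx set set" where
  "K_facets n P = { y ` {1..n+1} | y.
      (\<forall>i\<in>{1..n+1}. y i = Inl i \<or> (\<exists>B\<in>P. i \<in> B \<and> y i = Inr B)) \<and> inj_on y {1..n+1} }"

definition K_faces :: "nat \<Rightarrow> nat set set \<Rightarrow> vtx set set" where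
  "K_faces n P = { F. F \<noteq> {} \<and> (\<exists>S\<in>K_facets n P. F \<subseteq> S) }"

definition complex_iso :: "'a set \<Rightarrow> 'a set set \<Rightarrow> 'b set \<Rightarrow> 'b set set \<Rightarrow> bool" where
  "complex_iso V K V' K' \<longleftrightarrow> (\<exists>\<phi>. bij_betw \<phi> V V' \<and> (\<lambda>F. \<phi> ` F) ` K = K')"

definition perm_group :: "'a set \<Rightarrow> ('a \<Rightarrow> 'a) monoid" where
  "perm_group V = \<lparr> carrier = {p. p permutes V}, monoid.mult = (\<circ>), one = id \<rparr>"

definition K_gens :: "nat \<Rightarrow> nat set set \<Rightarrow> (vtx \<Rightarrow> vtx) set" where
  "K_gens n P = { transpose (Inl i) (Inr B) | i B. i \<in> {1..n+1} \<and> B \<in> P \<and> i \<in> B }"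

definition Cox :: "nat \<Rightarrow> nat set set \<Rightarrow> (vtx \<Rightarrow> vtx) monoid" where
  "Cox n P = subgroup_generated (perm_group (KV n P)) (K_gens n P)"

end

theory Submission
  imports Defs
begin

text \<open>
  Cox(K(P)) is the group of permutations of the vertices that preserve each set
  \<open>{p\<^sub>j} \<union> P\<^sub>j\<close>, i.e. the direct product of the symmetric groups on these sets, and the
  centralizer of the conjugacy class of an element is the product of the corresponding
  centralizers in the factors. In \<open>Sym(m)\<close>, \<open>m \<ge> 3\<close>, the centralizer of the conjugacy class of a
  non-identity element lies in the centralizer of the socle, with equality for suitable
  elements, while \<open>Sym(2)\<close> is abelian. Hence the maximal proper centralizers of conjugacy
  classes of Cox(K(P)) correspond to the blocks \<open>P\<^sub>j\<close> with at least two elements, and the index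
  of the one belonging to \<open>P\<^sub>j\<close> is 2, 6 or \<open>(|P\<^sub>j| + 1)!\<close> according as \<open>|P\<^sub>j|\<close> is 2, 3 or larger.
  Counting them by index recovers the number of blocks of each size \<open>\<ge> 2\<close>; the order of the
  group then gives the number of singletons. Partitions with the same block sizes differ by a
  relabeling of the points, and a relabeling induces an isomorphism of the complexes.
\<close>

section \<open>Centralizers of conjugacy classes\<close>

text \<open>The conjugates of \<open>x\<close> are written \<open>g \<otimes> x \<otimes> h\<close> with \<open>g \<otimes> h = \<one>\<close>, which in a group means
  \<open>h = inv g\<close> but avoids computing inverses in concrete groups.\<close>
definition conj_centralizer :: "('a, 'b) monoid_scheme \<Rightarrow> 'a \<Rightarrow> 'a set" where
  "conj_centralizer G x = {z \<in> carrier G. \<forall>g\<in>carrier G. \<forall>h\<in>carrier G. g \<otimes>\<^bsub>G\<^esub> h = \<one>\<^bsub>G\<^esub> \<longrightarrow>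
     z \<otimes>\<^bsub>G\<^esub> (g \<otimes>\<^bsub>G\<^esub> x \<otimes>\<^bsub>G\<^esub> h) = (g \<otimes>\<^bsub>G\<^esub> x \<otimes>\<^bsub>G\<^esub> h) \<otimes>\<^bsub>G\<^esub> z}"

definition conj_centralizers :: "('a, 'b) monoid_scheme \<Rightarrow> 'a set set" where
  "conj_centralizers G = conj_centralizer G ` carrier G - {carrier G}"

definition max_conj_centralizers :: "('a, 'b) monoid_scheme \<Rightarrow> 'a set set" where
  "max_conj_centralizers G =
     {D \<in> conj_centralizers G. \<forall>D'\<in>conj_centralizers G. D \<subseteq> D' \<longrightarrow> D' = D}"

lemma conj_centralizer_subset_carrier: "conj_centralizer G x \<subseteq> carrier G"
  by (auto simp: conj_centralizer_def)

lemma conj_centralizers_subset_carrier: "D \<in> conj_centralizers G \<Longrightarrow> D \<subseteq> carrier G"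
  unfolding conj_centralizers_def using conj_centralizer_subset_carrier[of G] by blast

lemma max_conj_centralizers_subset_carrier: "D \<in> max_conj_centralizers G \<Longrightarrow> D \<subseteq> carrier G"
  by (simp add: max_conj_centralizers_def conj_centralizers_subset_carrier)

context group_hom
begin

lemma conj_centralizer_hom_iff:
  assumes inj: "inj_on h (carrier G)" and surj: "h ` carrier G = carrier H"
    and x: "x \<in> carrier G" and z: "z \<in> carrier G"
  shows "h z \<in> conj_centralizer H (h x) \<longleftrightarrow> z \<in> conj_centralizer G x"
proof -
  have unit: "h g \<otimes>\<^bsub>H\<^esub> h k = \<one>\<^bsub>H\<^esub> \<longleftrightarrow> g \<otimes> k = \<one>"
    if "g \<in> carrier G" "k \<in> carrier G" for g k
    using that inj_onD[OF inj] by (metis G.m_closed G.one_closed hom_mult hom_one)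
  have comm: "h z \<otimes>\<^bsub>H\<^esub> (h g \<otimes>\<^bsub>H\<^esub> h x \<otimes>\<^bsub>H\<^esub> h k) = (h g \<otimes>\<^bsub>H\<^esub> h x \<otimes>\<^bsub>H\<^esub> h k) \<otimes>\<^bsub>H\<^esub> h z
      \<longleftrightarrow> z \<otimes> (g \<otimes> x \<otimes> k) = (g \<otimes> x \<otimes> k) \<otimes> z"
    if "g \<in> carrier G" "k \<in> carrier G" for g k
    using that x z inj_onD[OF inj] by (auto simp flip: hom_mult)
  show ?thesis
  proof
    assume hz: "h z \<in> conj_centralizer H (h x)"
    show "z \<in> conj_centralizer G x"
      unfolding conj_centralizer_def
    proof (intro CollectI conjI ballI impI z)
      fix g k assume g: "g \<in> carrier G" and k: "k \<in> carrier G" and "g \<otimes> k = \<one>"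
      then have "h g \<otimes>\<^bsub>H\<^esub> h k = \<one>\<^bsub>H\<^esub>" using unit by simp
      then have "h z \<otimes>\<^bsub>H\<^esub> (h g \<otimes>\<^bsub>H\<^esub> h x \<otimes>\<^bsub>H\<^esub> h k) = h g \<otimes>\<^bsub>H\<^esub> h x \<otimes>\<^bsub>H\<^esub> h k \<otimes>\<^bsub>H\<^esub> h z"
        using hz g k by (simp add: conj_centralizer_def)
      then show "z \<otimes> (g \<otimes> x \<otimes> k) = g \<otimes> x \<otimes> k \<otimes> z"
        using comm[OF g k] by simp
    qed
  next
    assume z_in: "z \<in> conj_centralizer G x"
    show "h z \<in> conj_centralizer H (h x)"
      unfolding conj_centralizer_def
    proof (intro CollectI conjI ballI impI)
      show "h z \<in> carrier H" using z by simp
      fix g' k' assume g': "g' \<in> carrier H" and k': "k' \<in> carrier H"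
        and unit': "g' \<otimes>\<^bsub>H\<^esub> k' = \<one>\<^bsub>H\<^esub>"
      obtain g k where "g \<in> carrier G" "k \<in> carrier G" "g' = h g" "k' = h k"
        using g' k' surj by (metis imageE)
      then show "h z \<otimes>\<^bsub>H\<^esub> (g' \<otimes>\<^bsub>H\<^esub> h x \<otimes>\<^bsub>H\<^esub> k') = g' \<otimes>\<^bsub>H\<^esub> h x \<otimes>\<^bsub>H\<^esub> k' \<otimes>\<^bsub>H\<^esub> h z"
        using z_in unit' unit comm by (auto simp: conj_centralizer_def)
    qed
  qed
qed

lemma image_conj_centralizer:
  assumes bij: "bij_betw h (carrier G) (carrier H)" and x: "x \<in> carrier G"
  shows "h ` conj_centralizer G x = conj_centralizer H (h x)"
proof -
  have inj: "inj_on h (carrier G)" and surj: "h ` carrier G = carrier H"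
    using bij by (auto simp: bij_betw_def)
  show ?thesis
  proof
    show "h ` conj_centralizer G x \<subseteq> conj_centralizer H (h x)"
    proof
      fix z' assume "z' \<in> h ` conj_centralizer G x"
      then obtain z where z: "z \<in> conj_centralizer G x" "z' = h z" by blast
      then have "z \<in> carrier G" using conj_centralizer_subset_carrier[of G x] by blast
      with z show "z' \<in> conj_centralizer H (h x)"
        using conj_centralizer_hom_iff[OF inj surj x] by simp
    qed
    show "conj_centralizer H (h x) \<subseteq> h ` conj_centralizer G x"
    proof
      fix z' assume z': "z' \<in> conj_centralizer H (h x)"
      then have "z' \<in> h ` carrier G"
        using surj by (simp add: conj_centralizer_def)
      then obtain z where "z \<in> carrier G" "z' = h z" by blast
      with z' show "z' \<in> h ` conj_centralizer G x"
        using conj_centralizer_hom_iff[OF inj surj x] by blast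
    qed
  qed
qed

lemma image_conj_centralizers:
  assumes bij: "bij_betw h (carrier G) (carrier H)"
  shows "(`) h ` conj_centralizers G = conj_centralizers H"
proof -
  have inj: "inj_on ((`) h) (Pow (carrier G))" and surj: "h ` carrier G = carrier H"
    using bij by (auto simp: bij_betw_def inj_on_image_Pow)
  have "(`) h ` conj_centralizer G ` carrier G = (\<lambda>x. conj_centralizer H (h x)) ` carrier G"
    unfolding image_image by (rule image_cong) (simp_all add: image_conj_centralizer[OF bij])
  also have "\<dots> = conj_centralizer H ` carrier H"
    by (simp add: image_image flip: surj)
  finally have "(`) h ` conj_centralizer G ` carrier G = conj_centralizer H ` carrier H" .
  moreover have "(`) h ` (conj_centralizer G ` carrier G - {carrier G})
      = (`) h ` conj_centralizer G ` carrier G - (`) h ` {carrier G}"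
    by (intro inj_on_image_set_diff[OF inj]) (auto simp: conj_centralizer_def)
  ultimately show ?thesis
    by (simp add: conj_centralizers_def surj)
qed

lemma image_max_conj_centralizers:
  assumes bij: "bij_betw h (carrier G) (carrier H)"
  shows "(`) h ` max_conj_centralizers G = max_conj_centralizers H"
proof -
  have inj: "inj_on h (carrier G)" using bij by (simp add: bij_betw_def)
  let ?C = "conj_centralizers G"
  note sub = conj_centralizers_subset_carrier
  have mono: "h ` D \<subseteq> h ` E \<longleftrightarrow> D \<subseteq> E" if "D \<in> ?C" "E \<in> ?C" for D E
    using sub[OF that(1)] sub[OF that(2)] inj
    by (auto simp: image_subset_iff) (meson inj_on_image_mem_iff subsetD)
  have eq: "h ` E = h ` D \<longleftrightarrow> E = D" if "D \<in> ?C" "E \<in> ?C" for D E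
    using inj_on_image_eq_iff[OF inj sub[OF that(2)] sub[OF that(1)]] .
  have max_iff: "h ` D \<in> max_conj_centralizers H \<longleftrightarrow> D \<in> max_conj_centralizers G"
    if D: "D \<in> ?C" for D
  proof -
    have "h ` D \<in> max_conj_centralizers H
        \<longleftrightarrow> (\<forall>E'\<in>(`) h ` ?C. h ` D \<subseteq> E' \<longrightarrow> E' = h ` D)"
      using D by (simp add: max_conj_centralizers_def flip: image_conj_centralizers[OF bij])
    also have "\<dots> \<longleftrightarrow> (\<forall>E\<in>?C. h ` D \<subseteq> h ` E \<longrightarrow> h ` E = h ` D)"
      by blast
    also have "\<dots> \<longleftrightarrow> (\<forall>E\<in>?C. D \<subseteq> E \<longrightarrow> E = D)"
      using mono[OF D] eq[OF D] by simp
    also have "\<dots> \<longleftrightarrow> D \<in> max_conj_centralizers G"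
      using D by (simp add: max_conj_centralizers_def)
    finally show ?thesis .
  qed
  show ?thesis
  proof
    show "(`) h ` max_conj_centralizers G \<subseteq> max_conj_centralizers H"
    proof
      fix D' assume "D' \<in> (`) h ` max_conj_centralizers G"
      then obtain D where "D \<in> max_conj_centralizers G" "D' = h ` D" by blast
      moreover then have "D \<in> ?C" by (simp add: max_conj_centralizers_def)
      ultimately show "D' \<in> max_conj_centralizers H" using max_iff by blast
    qed
    show "max_conj_centralizers H \<subseteq> (`) h ` max_conj_centralizers G"
    proof
      fix D' assume D': "D' \<in> max_conj_centralizers H"
      then have "D' \<in> (`) h ` ?C"
        by (simp add: max_conj_centralizers_def image_conj_centralizers[OF bij])
      then obtain D where "D \<in> ?C" "D' = h ` D" by blast
      with D' max_iff show "D' \<in> (`) h ` max_conj_centralizers G" by blast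
    qed
  qed
qed

end

theorem iso_card_max_conj_centralizers_index:
  assumes "group G" "group H" "G \<cong> H"
  shows "card {D \<in> max_conj_centralizers G. card (carrier G) = i * card D}
       = card {D \<in> max_conj_centralizers H. card (carrier H) = i * card D}"
proof -
  obtain h where h: "h \<in> iso G H" using assms(3) by (auto simp: is_iso_def)
  interpret group_hom G H h
    using assms(1,2) h by (simp add: group_hom_def group_hom_axioms_def iso_def)
  have bij: "bij_betw h (carrier G) (carrier H)" using h by (simp add: iso_def)
  then have inj: "inj_on h (carrier G)" by (simp add: bij_betw_def)
  let ?M = "\<lambda>G. {D \<in> max_conj_centralizers G. card (carrier G) = i * card D}"
  have "inj_on ((`) h) (Pow (carrier G))" using inj by (rule inj_on_image_Pow)
  then have inj_image: "inj_on ((`) h) (?M G)"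
    by (rule inj_on_subset) (auto dest: max_conj_centralizers_subset_carrier)
  have card_eq: "card (h ` D) = card D" if "D \<in> max_conj_centralizers G" for D
    using inj_on_subset[OF inj max_conj_centralizers_subset_carrier[OF that]] by (rule card_image)
  have "?M H = (`) h ` ?M G"
    using card_eq iso_same_card[OF assms(3)]
    by (auto simp flip: image_max_conj_centralizers[OF bij])
  then show ?thesis
    by (simp add: card_image[OF inj_image])
qed

section \<open>Symmetric groups\<close>

definition fixpoint_free :: "('a \<Rightarrow> 'a) \<Rightarrow> 'a set \<Rightarrow> bool" where
  "fixpoint_free w Y \<longleftrightarrow> (\<forall>v\<in>Y. w v \<noteq> v)"

lemma perm_group_simps [simp]:
  "carrier (perm_group V) = {p. p permutes V}"
  "monoid.mult (perm_group V) = (\<circ>)"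
  "one (perm_group V) = id"
  by (simp_all add: perm_group_def)

lemma group_perm_group: "group (perm_group V)"
  using permutes_inv permutes_inv_o(2)
  by (auto intro!: groupI simp: permutes_compose permutes_id comp_assoc, blast)

lemma perm_group_inv:
  assumes "p permutes V"
  shows "inv\<^bsub>perm_group V\<^esub> p = inv' p"
  using assms by (intro group.inv_equality[OF group_perm_group])
    (simp_all add: permutes_inv permutes_inv_o)

lemma permutes_right_inverse:
  assumes "g permutes Y" "g \<circ> h = id"
  shows "h = inv' g"
  by (metis assms comp_assoc comp_id id_comp permutes_inv_o(2))

lemma conj_centralizer_perm_group:
  "w \<in> conj_centralizer (perm_group Y) \<pi> \<longleftrightarrow>
     w permutes Y \<and> (\<forall>g. g permutes Y \<longrightarrow> w \<circ> (g \<circ> \<pi> \<circ> inv' g) = (g \<circ> \<pi> \<circ> inv' g) \<circ> w)"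
proof -
  have "(\<forall>g\<in>{p. p permutes Y}. \<forall>h\<in>{p. p permutes Y}. g \<circ> h = id \<longrightarrow> C g h)
      \<longleftrightarrow> (\<forall>g. g permutes Y \<longrightarrow> C g (inv' g))" for C
  proof (intro iffI allI impI ballI)
    fix g assume "\<forall>g\<in>{p. p permutes Y}. \<forall>h\<in>{p. p permutes Y}. g \<circ> h = id \<longrightarrow> C g h"
      and "g permutes Y"
    then show "C g (inv' g)" by (simp add: permutes_inv permutes_inv_o(1))
  next
    fix g h assume "\<forall>g. g permutes Y \<longrightarrow> C g (inv' g)"
      and "g \<in> {p. p permutes Y}" "h \<in> {p. p permutes Y}" "g \<circ> h = id"
    then show "C g h" using permutes_right_inverse by fastforce
  qed
  then show ?thesis
    unfolding conj_centralizer_def perm_group_simps mem_Collect_eq by simp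
qed

lemma conj_centralizer_perm_groupI:
  assumes "w permutes Y" "\<And>g v. g permutes Y \<Longrightarrow> w (g (\<pi> (inv' g v))) = g (\<pi> (inv' g (w v)))"
  shows "w \<in> conj_centralizer (perm_group Y) \<pi>"
  using assms unfolding conj_centralizer_perm_group by (auto simp: fun_eq_iff)

lemma conj_centralizer_perm_groupD:
  assumes "w \<in> conj_centralizer (perm_group Y) \<pi>"
  shows "w permutes Y" and "g permutes Y \<Longrightarrow> w (g (\<pi> (inv' g v))) = g (\<pi> (inv' g (w v)))"
  using assms unfolding conj_centralizer_perm_group by (auto simp: fun_eq_iff)

lemma conj_centralizer_perm_group_commute:
  "w \<in> conj_centralizer (perm_group Y) \<pi> \<Longrightarrow> w (\<pi> v) = \<pi> (w v)"
  using conj_centralizer_perm_groupD(2)[OF _ permutes_id] by simp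

lemma conj_centralizer_perm_group_id:
  "conj_centralizer (perm_group Y) id = {w. w permutes Y}"
  by (auto simp: conj_centralizer_perm_group permutes_inv_o)

lemma id_in_conj_centralizer_perm_group: "id \<in> conj_centralizer (perm_group Y) \<pi>"
  by (rule conj_centralizer_perm_groupI) (simp_all add: permutes_id)

lemma conj_centralizer_perm_group_conj:
  assumes w: "w \<in> conj_centralizer (perm_group Y) \<pi>" and g: "g permutes Y"
  shows "g \<circ> w \<circ> inv' g \<in> conj_centralizer (perm_group Y) \<pi>"
proof (rule conj_centralizer_perm_groupI)
  show "g \<circ> w \<circ> inv' g permutes Y"
    using g conj_centralizer_perm_groupD(1)[OF w] by (intro permutes_compose permutes_inv)
  fix c v assume c: "c permutes Y"
  have "inv' (inv' g \<circ> c) = inv' c \<circ> g"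
    using g c by (simp add: o_inv_distrib inv_inv_eq permutes_bij bij_imp_bij_inv)
  with conj_centralizer_perm_groupD(2)[OF w permutes_compose[OF c permutes_inv[OF g]],
      of "inv' g v"]
  have "w (inv' g (c (\<pi> (inv' c v)))) = inv' g (c (\<pi> (inv' c (g (w (inv' g v))))))"
    using g by (simp add: permutes_inverses)
  then show "(g \<circ> w \<circ> inv' g) (c (\<pi> (inv' c v))) = c (\<pi> (inv' c ((g \<circ> w \<circ> inv' g) v)))"
    using g by (simp add: permutes_inverses)
qed

lemma conj_centralizer_perm_group_comp:
  assumes "w1 \<in> conj_centralizer (perm_group Y) \<pi>" "w2 \<in> conj_centralizer (perm_group Y) \<pi>"
  shows "w1 \<circ> w2 \<in> conj_centralizer (perm_group Y) \<pi>"
proof (rule conj_centralizer_perm_groupI)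
  show "w1 \<circ> w2 permutes Y"
    using assms by (intro permutes_compose) (auto dest: conj_centralizer_perm_groupD(1))
  fix g v assume "g permutes Y"
  then show "(w1 \<circ> w2) (g (\<pi> (inv' g v))) = g (\<pi> (inv' g ((w1 \<circ> w2) v)))"
    using assms by (simp add: conj_centralizer_perm_groupD(2))
qed

lemma conj_centralizer_perm_group_inv:
  assumes w: "w \<in> conj_centralizer (perm_group Y) \<pi>"
  shows "inv' w \<in> conj_centralizer (perm_group Y) \<pi>"
proof (rule conj_centralizer_perm_groupI)
  have wY: "w permutes Y" using conj_centralizer_perm_groupD(1)[OF w] .
  then show "inv' w permutes Y" by (rule permutes_inv)
  fix g v assume "g permutes Y"
  from conj_centralizer_perm_groupD(2)[OF w this, of "inv' w v"]
  show "inv' w (g (\<pi> (inv' g v))) = g (\<pi> (inv' g (inv' w v)))"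
    using wY by (metis permutes_inverses)
qed

lemma conj_centralizer_perm_group_sym:
  assumes "\<pi> permutes Y" "w \<in> conj_centralizer (perm_group Y) \<pi>"
  shows "\<pi> \<in> conj_centralizer (perm_group Y) w"
proof (rule conj_centralizer_perm_groupI[OF assms(1)])
  fix g v assume "g permutes Y"
  from conj_centralizer_perm_group_commute[OF conj_centralizer_perm_group_conj[OF assms(2) this]]
  show "\<pi> (g (w (inv' g v))) = g (w (inv' g (\<pi> v)))" by simp
qed

lemma card_moved_transpose_comp_less:
  assumes p: "p permutes S" and "finite S" and v: "p v \<noteq> v"
  shows "card {u. (transpose v (p v) \<circ> p) u \<noteq> u} < card {u. p u \<noteq> u}"
proof -
  have fin: "finite {u. p u \<noteq> u}"
    using assms(2) p
    by (metis (mono_tags, lifting) finite_subset mem_Collect_eq permutes_not_in subsetI)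
  have "{u. (transpose v (p v) \<circ> p) u \<noteq> u} \<subseteq> {u. p u \<noteq> u} - {v}"
    using v permutes_inj[OF p] by (auto simp: transpose_def inj_eq split: if_splits)
  then have "card {u. (transpose v (p v) \<circ> p) u \<noteq> u} \<le> card ({u. p u \<noteq> u} - {v})"
    using fin by (intro card_mono) auto
  also have "\<dots> < card {u. p u \<noteq> u}" using fin v by (intro card_Diff1_less) auto
  finally show ?thesis .
qed

lemma exists_permutes_map_pair:
  assumes "a \<in> Y" "b \<in> Y" "c \<in> Y" "d \<in> Y" "a \<noteq> b" "c \<noteq> d"
  obtains g where "g permutes Y" "g a = c" "g b = d"
proof
  let ?t = "transpose c a"
  have tb: "?t b \<noteq> c" "?t b \<in> Y" using assms by (auto simp: transpose_def)
  show "transpose d (?t b) \<circ> ?t permutes Y"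
    using assms tb by (intro permutes_compose permutes_swap_id)
  show "(transpose d (?t b) \<circ> ?t) a = c" "(transpose d (?t b) \<circ> ?t) b = d"
    using assms tb by (auto simp: transpose_def)
qed

lemma card_less_imp_ex_notin:
  assumes "finite A" "card A < card Y"
  shows "\<exists>u\<in>Y. u \<notin> A"
  using assms card_mono not_le subsetI by metis

lemma conj_centralizer_perm_group_eq_id_of_fixpoint:
  assumes \<pi>: "\<pi> permutes Y" "\<pi> \<noteq> id" and f: "f \<in> Y" "\<pi> f = f"
    and w: "w \<in> conj_centralizer (perm_group Y) \<pi>"
  shows "w = id"
proof (rule ccontr)
  assume "w \<noteq> id"
  then obtain a where a: "w a \<noteq> a" by (auto simp: fun_eq_iff)
  obtain s where s: "\<pi> s \<noteq> s" using \<pi>(2) by (auto simp: fun_eq_iff)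
  have wY: "w permutes Y" using conj_centralizer_perm_groupD(1)[OF w] .
  have Y: "a \<in> Y" "s \<in> Y"
    using a s wY \<pi>(1) by (meson permutes_not_in)+
  have wa: "w a \<in> Y" using Y(1) wY by (simp add: permutes_in_image)
  \<comment> \<open>conjugate \<open>\<pi>\<close> so that it fixes \<open>a\<close> but moves \<open>w a\<close>; \<open>w\<close> cannot commute with that\<close>
  have "f \<noteq> s" "a \<noteq> w a" using f s a by auto
  then obtain g where g: "g permutes Y" "g f = a" "g s = w a"
    using exists_permutes_map_pair[OF f(1) Y(2) Y(1) wa] by blast
  have "inv' g a = f" "inv' g (w a) = s"
    using g by (simp_all add: permutes_inv_eq[OF g(1)])
  with conj_centralizer_perm_groupD(2)[OF w g(1), of a] have "g s = g (\<pi> s)"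
    using f g by simp
  then show False using s g(1) by (metis permutes_inverses(2))
qed

lemma fixpoint_free_of_conj_centralizer:
  assumes "\<pi> permutes Y" "\<pi> \<noteq> id" "w \<in> conj_centralizer (perm_group Y) \<pi>" "w \<noteq> id"
  shows "fixpoint_free w Y"
  unfolding fixpoint_free_def
proof (intro ballI notI)
  fix f assume "f \<in> Y" "w f = f"
  with conj_centralizer_perm_group_eq_id_of_fixpoint[OF conj_centralizer_perm_groupD(1)[OF assms(3)]
      assms(4)]
    conj_centralizer_perm_group_sym[OF assms(1,3)]
  show False using assms(2) by blast
qed

lemma conj_centralizer_perm_group_eq_id_of_card_ge_5:
  assumes Y: "finite Y" "5 \<le> card Y" and \<pi>: "\<pi> permutes Y" "\<pi> \<noteq> id"
    and w: "w \<in> conj_centralizer (perm_group Y) \<pi>"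
  shows "w = id"
proof (cases "\<exists>f\<in>Y. \<pi> f = f")
  case True
  then obtain f where "f \<in> Y" "\<pi> f = f" by blast
  then show ?thesis by (rule conj_centralizer_perm_group_eq_id_of_fixpoint[OF \<pi> _ _ w])
next
  case False
  obtain d where d: "d \<in> Y"
    using card_less_imp_ex_notin[of "{}" Y] Y by force
  have "card {d, \<pi> d} < card Y" using Y card_length[of "[d, \<pi> d]"] by simp
  then obtain e where e: "e \<in> Y" "e \<notin> {d, \<pi> d}"
    using card_less_imp_ex_notin[of "{d, \<pi> d}" Y] by blast
  have "card {d, e, \<pi> d, \<pi> e} < card Y"
    using Y card_length[of "[d, e, \<pi> d, \<pi> e]"] by simp
  then obtain u where u: "u \<in> Y" "u \<notin> {d, e, \<pi> d, \<pi> e}"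
    using card_less_imp_ex_notin[of "{d, e, \<pi> d, \<pi> e}" Y] by blast
  define \<tau> where "\<tau> = transpose d e"
  define \<rho> where "\<rho> = \<pi> \<circ> (\<tau> \<circ> inv' \<pi> \<circ> inv' \<tau>)"
  have wY: "w permutes Y" using conj_centralizer_perm_groupD(1)[OF w] .
  have \<tau>Y: "\<tau> permutes Y" using d e by (simp add: \<tau>_def permutes_swap_id)
  \<comment> \<open>\<open>\<rho>\<close> is a product of conjugates of \<open>\<pi>\<close> and \<open>inv' \<pi>\<close> and, unlike \<open>\<pi>\<close>, has a fixed point\<close>
  have "\<pi> \<in> conj_centralizer (perm_group Y) w"
    using conj_centralizer_perm_group_sym[OF \<pi>(1) w] .
  moreover from this have "\<tau> \<circ> inv' \<pi> \<circ> inv' \<tau> \<in> conj_centralizer (perm_group Y) w"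
    by (rule conj_centralizer_perm_group_conj[OF conj_centralizer_perm_group_inv \<tau>Y])
  ultimately have "\<rho> \<in> conj_centralizer (perm_group Y) w"
    unfolding \<rho>_def by (rule conj_centralizer_perm_group_comp)
  then have \<rho>: "\<rho> permutes Y" "w \<in> conj_centralizer (perm_group Y) \<rho>"
    using conj_centralizer_perm_groupD(1) conj_centralizer_perm_group_sym[OF wY] by blast+
  have \<pi>\<pi>: "\<pi> (inv' \<pi> x) = x" for x using permutes_inverses(1)[OF \<pi>(1)] .
  have "inv' \<pi> u \<notin> {d, e}" using u \<pi>\<pi> by auto
  then have "\<rho> u = u" using u by (simp add: \<rho>_def \<tau>_def \<pi>\<pi>)
  have "inv' \<pi> e \<notin> {d, e}" using False e \<pi>\<pi> by (auto, metis)
  then have "\<rho> d = e" by (simp add: \<rho>_def \<tau>_def \<pi>\<pi>)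
  then have "\<rho> \<noteq> id" using e by auto
  then show ?thesis
    by (rule conj_centralizer_perm_group_eq_id_of_fixpoint[OF \<rho>(1) _ u(1) \<open>\<rho> u = u\<close> \<rho>(2)])
qed

lemma conj_centralizer_perm_group_involution_of_card_4:
  assumes Y: "finite Y" "card Y = 4" and \<pi>: "\<pi> permutes Y" "\<pi> \<noteq> id"
    and w: "w \<in> conj_centralizer (perm_group Y) \<pi>" "w \<noteq> id"
  shows "w \<circ> w = id"
proof (rule ccontr)
  have wY: "w permutes Y" using conj_centralizer_perm_groupD(1)[OF w(1)] .
  have fpf: "w v \<noteq> v" if "v \<in> Y" for v
    using fixpoint_free_of_conj_centralizer[OF \<pi> w] that by (simp add: fixpoint_free_def)
  have w_eq: "w x = w y \<longleftrightarrow> x = y" for x y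
    using wY by (simp add: permutes_inj inj_eq)
  assume "w \<circ> w \<noteq> id"
  then obtain a where a: "w (w a) \<noteq> a" by (auto simp: fun_eq_iff)
  define b where "b = w a"
  define c where "c = w b"
  have abc: "a \<in> Y" "b \<in> Y" "c \<in> Y"
    using a wY by (auto simp: b_def c_def permutes_in_image dest: permutes_not_in)
  have dist: "a \<noteq> b" "b \<noteq> c" "a \<noteq> c"
    using fpf[OF abc(1)] fpf[OF abc(2)] a unfolding c_def b_def by metis+
  have "w c \<noteq> a"
  proof
    assume wc: "w c = a"
    have "card {a, b, c} < card Y" using Y card_length[of "[a, b, c]"] by simp
    then obtain e where e: "e \<in> Y" "e \<notin> {a, b, c}"
      using card_less_imp_ex_notin[of "{a, b, c}" Y] by blast
    have "{a, b, c, e} \<subseteq> Y" "card {a, b, c, e} = 4" using abc e dist by auto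
    then have "Y = {a, b, c, e}" using Y by (metis card_subset_eq finite.emptyI finite.insertI)
    moreover have "w e \<in> Y" using e(1) wY by (simp add: permutes_in_image)
    moreover have "w e \<notin> {a, b, c, e}"
      using e fpf[OF e(1)] w_eq wc by (auto simp: b_def c_def)
    ultimately show False by simp
  qed
  \<comment> \<open>Multiplying \<open>w\<close> by its conjugate under the transposition of \<open>a\<close> and \<open>w a\<close>
    gives an element of the centralizer that fixes \<open>w a\<close> but not \<open>a\<close>.\<close>
  define \<tau> where "\<tau> = transpose a b"
  define w' where "w' = w \<circ> (\<tau> \<circ> w \<circ> inv' \<tau>)"
  have "w' \<in> conj_centralizer (perm_group Y) \<pi>"
    unfolding w'_def \<tau>_def using abc w(1)
    by (intro conj_centralizer_perm_group_comp conj_centralizer_perm_group_conj permutes_swap_id)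
  moreover have "w' b = b" "w' a \<noteq> a"
    using dist \<open>w c \<noteq> a\<close> by (simp_all add: w'_def \<tau>_def b_def c_def)
  moreover from this have "w' \<noteq> id" by auto
  ultimately show False
    using fixpoint_free_of_conj_centralizer[OF \<pi>] abc(2) unfolding fixpoint_free_def by blast
qed

text \<open>For \<open>m = card Y \<ge> 3\<close> this is the centralizer in \<open>Sym(Y)\<close> of the socle of \<open>Sym(Y)\<close>, i.e. of
  its unique minimal normal subgroup (\<open>A\<^sub>3\<close>, the Klein four-group, resp. \<open>A\<^sub>m\<close> for \<open>m \<ge> 5\<close>).\<close>
definition socle_centralizer :: "'a set \<Rightarrow> ('a \<Rightarrow> 'a) set" where
  "socle_centralizer Y = {w. w permutes Y \<and>
     (w = id \<or> card Y \<le> 4 \<and> fixpoint_free w Y \<and> (card Y = 4 \<longrightarrow> w \<circ> w = id))}"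

lemma conj_centralizer_subset_socle_centralizer:
  assumes "finite Y" "3 \<le> card Y" "\<pi> permutes Y" "\<pi> \<noteq> id"
  shows "conj_centralizer (perm_group Y) \<pi> \<subseteq> socle_centralizer Y"
proof
  fix w assume w: "w \<in> conj_centralizer (perm_group Y) \<pi>"
  consider "card Y \<le> 4" "card Y \<noteq> 4" | "card Y = 4" | "5 \<le> card Y" by linarith
  then show "w \<in> socle_centralizer Y"
    using assms w fixpoint_free_of_conj_centralizer conj_centralizer_perm_group_involution_of_card_4
      conj_centralizer_perm_group_eq_id_of_card_ge_5 conj_centralizer_perm_groupD(1)
    by cases (auto simp: socle_centralizer_def)
qed

lemma socle_centralizer_conj:
  assumes w: "w \<in> socle_centralizer Y" and g: "g permutes Y"
  shows "g \<circ> w \<circ> inv' g \<in> socle_centralizer Y"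
proof -
  have gg: "g (inv' g x) = x" "inv' g (g x) = x" for x using g by (simp_all add: permutes_inverses)
  have "fixpoint_free (g \<circ> w \<circ> inv' g) Y" if fpf: "fixpoint_free w Y"
    unfolding fixpoint_free_def
  proof (intro ballI notI)
    fix v assume "v \<in> Y" "(g \<circ> w \<circ> inv' g) v = v"
    then have "inv' g v \<in> Y" "w (inv' g v) = inv' g v"
      using g gg by (auto simp: permutes_in_image permutes_inv) (metis gg(2))
    then show False using fpf by (simp add: fixpoint_free_def)
  qed
  moreover have "(g \<circ> w \<circ> inv' g) \<circ> (g \<circ> w \<circ> inv' g) = id" if "w \<circ> w = id"
    using that gg by (simp add: fun_eq_iff)
  moreover have "g \<circ> w \<circ> inv' g permutes Y"
    using w g by (intro permutes_compose permutes_inv) (auto simp: socle_centralizer_def)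
  ultimately show ?thesis
    using w g by (auto simp: socle_centralizer_def permutes_inv_o)
qed

lemma permutes_eqI:
  assumes "u permutes Y" "v permutes Y" "\<And>x. x \<in> Y \<Longrightarrow> u x = v x"
  shows "u = v"
  using assms by (metis ext permutes_not_in)

lemma socle_centralizer_3:
  assumes abc: "distinct [a, b, c]"
  shows "socle_centralizer {a, b, c} =
    {id, transpose a b \<circ> transpose b c, transpose a c \<circ> transpose c b}"
proof -
  let ?Y = "{a, b, c}"
  have card: "card ?Y = 3" using abc by simp
  have "w = transpose a b \<circ> transpose b c \<or> w = transpose a c \<circ> transpose c b"
    if w: "w permutes ?Y" "fixpoint_free w ?Y" for w
  proof -
    have "w a \<in> ?Y" "w b \<in> ?Y" "w c \<in> ?Y" using permutes_in_image[OF w(1)] by auto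
    moreover have "w a \<noteq> w b" "w a \<noteq> w c" "w b \<noteq> w c"
      using abc permutes_inj[OF w(1)] by (auto dest: injD)
    moreover have "w a \<noteq> a" "w b \<noteq> b" "w c \<noteq> c"
      using w(2) by (auto simp: fixpoint_free_def)
    ultimately have "(w a = b \<and> w b = c \<and> w c = a) \<or> (w a = c \<and> w c = b \<and> w b = a)"
      by auto
    then show ?thesis
      using abc w(1)
      by (auto intro!: permutes_eqI[OF w(1)] intro: permutes_compose permutes_swap_id)
  qed
  moreover have "transpose a b \<circ> transpose b c \<in> socle_centralizer ?Y"
    "transpose a c \<circ> transpose c b \<in> socle_centralizer ?Y"
    using abc card by (auto simp: socle_centralizer_def fixpoint_free_def
        intro: permutes_compose permutes_swap_id)
  ultimately show ?thesis
    using card by (auto simp: socle_centralizer_def permutes_id)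
qed

lemma transpose_comp_transpose_involutory:
  assumes "distinct [a, b, c, d]"
  shows "(transpose a b \<circ> transpose c d) \<circ> (transpose a b \<circ> transpose c d) = id"
proof -
  have "transpose a b \<circ> transpose c d = transpose c d \<circ> transpose a b"
    using assms by (auto simp: fun_eq_iff transpose_def)
  then show ?thesis by (metis comp_assoc comp_id transpose_comp_involutory)
qed

lemma socle_centralizer_4:
  assumes abcd: "distinct [a, b, c, d]"
  shows "socle_centralizer {a, b, c, d} = {id, transpose a b \<circ> transpose c d,
    transpose a c \<circ> transpose b d, transpose a d \<circ> transpose b c}"
proof -
  let ?Y = "{a, b, c, d}"
  have card: "card ?Y = 4" using abcd by simp
  have "w = transpose a b \<circ> transpose c d \<or> w = transpose a c \<circ> transpose b d \<or>
      w = transpose a d \<circ> transpose b c"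
    if w: "w permutes ?Y" "fixpoint_free w ?Y" "w \<circ> w = id" for w
  proof -
    have inv: "w (w x) = x" for x using w(3) by (simp add: fun_eq_iff)
    have Y: "w x \<in> ?Y" if "x \<in> ?Y" for x using permutes_in_image[OF w(1)] that by blast
    have ne: "w x \<noteq> w y" if "x \<noteq> y" for x y using permutes_inj[OF w(1)] that by (auto dest: injD)
    have fp: "w x \<noteq> x" if "x \<in> ?Y" for x using w(2) that by (auto simp: fixpoint_free_def)
    have swap: "w = transpose a x \<circ> transpose y z"
      if "w a = x" "distinct [a, x, y, z]" "?Y = {a, x, y, z}" for x y z
    proof -
      have "w x = a" using inv[of a] that(1) by simp
      moreover have "w y = z"
        using Y[of y] fp[of y] ne[of y a] ne[of y x] that \<open>w x = a\<close> by auto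
      moreover have "w z = y" using inv[of y] \<open>w y = z\<close> by simp
      ultimately show ?thesis
        using that by (intro permutes_eqI[OF w(1)] permutes_compose permutes_swap_id) auto
    qed
    have "w a = b \<or> w a = c \<or> w a = d" using Y[of a] fp[of a] by auto
    then show ?thesis
      using swap[of b c d] swap[of c b d] swap[of d b c] abcd by (auto simp: insert_commute)
  qed
  moreover have "transpose a b \<circ> transpose c d \<in> socle_centralizer ?Y"
    "transpose a c \<circ> transpose b d \<in> socle_centralizer ?Y"
    "transpose a d \<circ> transpose b c \<in> socle_centralizer ?Y"
    using abcd card transpose_comp_transpose_involutory[of a b c d]
      transpose_comp_transpose_involutory[of a c b d]
      transpose_comp_transpose_involutory[of a d b c]
    by (auto simp: socle_centralizer_def fixpoint_free_def intro: permutes_compose permutes_swap_id)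
  ultimately show ?thesis
    using card by (auto simp: socle_centralizer_def permutes_id)
qed

lemma card_eq_4E:
  assumes "card Y = 4"
  obtains a b c d where "Y = {a, b, c, d}" "distinct [a, b, c, d]"
proof -
  from assms have "card Y = Suc 3" by simp
  then obtain a B where "Y = insert a B" "a \<notin> B" "card B = 3" unfolding card_Suc_eq by blast
  moreover from \<open>card B = 3\<close> obtain b c d where "B = {b, c, d}" "distinct [b, c, d]"
    by (auto simp: card_3_iff)
  ultimately show ?thesis using that by auto
qed

lemma socle_centralizer_card_ge_5:
  "5 \<le> card Y \<Longrightarrow> socle_centralizer Y = {id}"
  by (auto simp: socle_centralizer_def permutes_id)

lemma card_socle_centralizer:
  assumes "finite Y" "3 \<le> card Y"
  shows "card (socle_centralizer Y) = (if card Y \<le> 4 then card Y else 1)"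
proof -
  consider "card Y = 3" | "card Y = 4" | "5 \<le> card Y" using assms(2) by linarith
  then show ?thesis
  proof cases
    case 1
    then obtain a b c where Y: "Y = {a, b, c}" "distinct [a, b, c]" by (auto simp: card_3_iff)
    let ?ws = "[id, transpose a b \<circ> transpose b c, transpose a c \<circ> transpose c b]"
    have "distinct (map (\<lambda>w. w a) ?ws)" using Y(2) by auto
    then have "distinct ?ws" by (rule distinct_map[THEN iffD1, THEN conjunct1])
    then have "card (set ?ws) = 3" using distinct_card by fastforce
    then show ?thesis using 1 Y by (simp add: socle_centralizer_3)
  next
    case 2
    then obtain a b c d where Y: "Y = {a, b, c, d}" "distinct [a, b, c, d]" by (rule card_eq_4E)
    let ?ws = "[id, transpose a b \<circ> transpose c d, transpose a c \<circ> transpose b d,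
      transpose a d \<circ> transpose b c]"
    have "distinct (map (\<lambda>w. w a) ?ws)" using Y(2) by auto
    then have "distinct ?ws" by (rule distinct_map[THEN iffD1, THEN conjunct1])
    then have "card (set ?ws) = 4" using distinct_card by fastforce
    then show ?thesis using 2 Y by (simp add: socle_centralizer_4)
  next
    case 3
    then show ?thesis by (simp add: socle_centralizer_card_ge_5)
  qed
qed

lemma socle_centralizer_commute:
  assumes "finite Y" "3 \<le> card Y" "u \<in> socle_centralizer Y" "v \<in> socle_centralizer Y"
  shows "u \<circ> v = v \<circ> u"
proof -
  consider "card Y = 3" | "card Y = 4" | "5 \<le> card Y" using assms(2) by linarith
  then show ?thesis
  proof cases
    case 1
    then obtain a b c where Y: "Y = {a, b, c}" "distinct [a, b, c]" by (auto simp: card_3_iff)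
    then show ?thesis
      using assms(3,4) by (auto simp: socle_centralizer_3 fun_eq_iff transpose_def)
  next
    case 2
    then obtain a b c d where Y: "Y = {a, b, c, d}" "distinct [a, b, c, d]" by (rule card_eq_4E)
    then show ?thesis
      using assms(3,4) by (auto simp: socle_centralizer_4 fun_eq_iff transpose_def)
  next
    case 3
    then show ?thesis using assms(3,4) by (simp add: socle_centralizer_card_ge_5)
  qed
qed

lemma exists_conj_centralizer_eq_socle_centralizer:
  assumes Y: "finite Y" "3 \<le> card Y"
  obtains \<pi> where "\<pi> permutes Y" "\<pi> \<noteq> id"
    "conj_centralizer (perm_group Y) \<pi> = socle_centralizer Y"
proof (cases "card Y \<le> 4")
  case True
  have "card {id} < card (socle_centralizer Y)" using card_socle_centralizer[OF Y] Y True by simp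
  then obtain \<pi> where \<pi>: "\<pi> \<in> socle_centralizer Y" "\<pi> \<noteq> id"
    using card_less_imp_ex_notin[of "{id}"] by blast
  then have \<pi>Y: "\<pi> permutes Y" by (simp add: socle_centralizer_def)
  have "socle_centralizer Y \<subseteq> conj_centralizer (perm_group Y) \<pi>"
  proof
    fix w assume w: "w \<in> socle_centralizer Y"
    have "w \<circ> (g \<circ> \<pi> \<circ> inv' g) = (g \<circ> \<pi> \<circ> inv' g) \<circ> w" if "g permutes Y" for g
      using socle_centralizer_commute[OF Y w socle_centralizer_conj[OF \<pi>(1) that]] .
    with w show "w \<in> conj_centralizer (perm_group Y) \<pi>"
      by (simp add: conj_centralizer_perm_group socle_centralizer_def)
  qed
  with conj_centralizer_subset_socle_centralizer[OF Y \<pi>Y \<pi>(2)] that \<pi>Y \<pi>(2) show ?thesis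
    by blast
next
  case False
  obtain a where a: "a \<in> Y" using card_less_imp_ex_notin[of "{}" Y] Y by force
  obtain b where b: "b \<in> Y" "b \<notin> {a}" using card_less_imp_ex_notin[of "{a}" Y] Y by force
  let ?\<pi> = "transpose a b"
  have \<pi>: "?\<pi> permutes Y" "?\<pi> \<noteq> id"
    using a b by (simp_all add: permutes_swap_id transpose_eq_id_iff)
  have "conj_centralizer (perm_group Y) ?\<pi> = {id}"
    using conj_centralizer_subset_socle_centralizer[OF Y \<pi>] socle_centralizer_card_ge_5[of Y] False
      id_in_conj_centralizer_perm_group by auto
  then show ?thesis using that \<pi> False socle_centralizer_card_ge_5[of Y] by simp
qed

lemma permutes_card_2_commute:
  assumes "card Y = 2" "u permutes Y" "v permutes Y"
  shows "u \<circ> v = v \<circ> u"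
proof
  fix x
  obtain a b where Y: "Y = {a, b}" "a \<noteq> b" using assms(1) by (auto simp: card_2_iff)
  have "w a \<in> Y" "w b \<in> Y" "w a \<noteq> w b" "x \<notin> Y \<Longrightarrow> w x = x" if "w permutes Y" for w
    using that Y permutes_in_image[OF that] by (auto simp: permutes_not_in dest: permutes_inj injD)
  from this[OF assms(2)] this[OF assms(3)] Y show "(u \<circ> v) x = (v \<circ> u) x"
    by (cases "x \<in> Y") auto
qed

lemma conj_centralizer_perm_group_card_2:
  assumes "card Y = 2" "\<pi> permutes Y"
  shows "conj_centralizer (perm_group Y) \<pi> = {w. w permutes Y}"
proof -
  have "g \<circ> \<pi> \<circ> inv' g permutes Y" if "g permutes Y" for g
    using that assms(2) by (intro permutes_compose permutes_inv)
  then show ?thesis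
    using permutes_card_2_commute[OF assms(1)] by (auto simp: conj_centralizer_perm_group)
qed

text \<open>The index of the socle centralizer in the symmetric group on \<open>m \<ge> 3\<close> points.\<close>
definition socle_centralizer_index :: "nat \<Rightarrow> nat" where
  "socle_centralizer_index m = (if m = 3 then 2 else if m = 4 then 6 else fact m)"

lemma fact_eq_socle_centralizer_index:
  assumes "finite Y" "3 \<le> card Y"
  shows "fact (card Y) = socle_centralizer_index (card Y) * card (socle_centralizer Y)"
proof -
  consider "card Y = 3" | "card Y = 4" | "5 \<le> card Y" using assms(2) by linarith
  then show ?thesis
    using card_socle_centralizer[OF assms]
    by cases (simp_all add: socle_centralizer_index_def fact_numeral)
qed

lemma socle_centralizer_index_strict_mono:
  assumes "3 \<le> m" "m < m'"
  shows "socle_centralizer_index m < socle_centralizer_index m'"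
proof -
  consider "m = 3" "m' = 4" | "m \<le> 4" "5 \<le> m'" | "5 \<le> m" using assms by linarith
  then show ?thesis
  proof cases
    case 2
    then have "fact 5 \<le> (fact m' :: nat)" by (intro fact_mono) simp
    with 2 assms show ?thesis by (auto simp: socle_centralizer_index_def fact_numeral)
  next
    case 3
    then have "fact m < (fact m' :: nat)" using assms by (intro fact_less_mono_nat) auto
    with 3 assms show ?thesis by (simp add: socle_centralizer_index_def)
  qed (simp add: socle_centralizer_index_def)
qed

lemma inj_on_socle_centralizer_index: "inj_on socle_centralizer_index {3..}"
  by (rule inj_onI)
    (metis atLeast_iff linorder_neqE_nat less_irrefl socle_centralizer_index_strict_mono)

section \<open>Cox(K(P)) as a product of symmetric groups\<close>

definition block_vertices :: "nat set \<Rightarrow> vtx set" where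
  "block_vertices B = insert (Inr B) (Inl ` B)"

definition block_perms :: "nat \<Rightarrow> nat set set \<Rightarrow> (vtx \<Rightarrow> vtx) set" where
  "block_perms n P = {p. p permutes KV n P \<and> (\<forall>B\<in>P. \<forall>v\<in>block_vertices B. p v \<in> block_vertices B)}"

definition restrict_block :: "nat set \<Rightarrow> (vtx \<Rightarrow> vtx) \<Rightarrow> vtx \<Rightarrow> vtx" where
  "restrict_block B p = (\<lambda>v. if v \<in> block_vertices B then p v else v)"

locale block_partition =
  fixes n :: nat and P :: "nat set set"
  assumes part: "partition_on {1..n+1} P"
begin

lemma finite_partition: "finite P"
  using part by (meson finite_atLeastAtMost finite_elements)

lemma block_subset: "B \<in> P \<Longrightarrow> B \<subseteq> {1..n+1}"
  using part by (auto simp: partition_on_def)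

lemma finite_block: "B \<in> P \<Longrightarrow> finite B"
  using block_subset finite_subset by blast

lemma block_nonempty: "B \<in> P \<Longrightarrow> B \<noteq> {}"
  using part by (auto simp: partition_on_def)

lemma block_unique: "B \<in> P \<Longrightarrow> B' \<in> P \<Longrightarrow> i \<in> B \<Longrightarrow> i \<in> B' \<Longrightarrow> B = B'"
  using part unfolding partition_on_def disjoint_def by blast

lemma ex_block: "i \<in> {1..n+1} \<Longrightarrow> \<exists>B\<in>P. i \<in> B"
  using part by (auto simp: partition_on_def)

lemma finite_KV: "finite (KV n P)"
  using finite_partition by (simp add: KV_def)

lemma block_vertices_subset_KV: "B \<in> P \<Longrightarrow> block_vertices B \<subseteq> KV n P"
  using block_subset by (auto simp: block_vertices_def KV_def)

lemma finite_block_vertices: "B \<in> P \<Longrightarrow> finite (block_vertices B)"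
  using finite_block by (simp add: block_vertices_def)

lemma card_block_vertices: "B \<in> P \<Longrightarrow> card (block_vertices B) = card B + 1"
proof -
  assume B: "B \<in> P"
  have "Inr B \<notin> Inl ` B" by auto
  then show ?thesis using finite_block[OF B] by (simp add: block_vertices_def card_image)
qed

lemma block_vertices_unique:
  "B \<in> P \<Longrightarrow> B' \<in> P \<Longrightarrow> v \<in> block_vertices B \<Longrightarrow> v \<in> block_vertices B' \<Longrightarrow> B = B'"
  unfolding block_vertices_def using block_unique by auto

lemma ex_block_vertices: "v \<in> KV n P \<Longrightarrow> \<exists>B\<in>P. v \<in> block_vertices B"
proof -
  assume "v \<in> KV n P"
  then consider i where "i \<in> {1..n+1}" "v = Inl i" | B where "B \<in> P" "v = Inr B"
    unfolding KV_def by blast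
  then show ?thesis
  proof cases
    case 1
    then obtain B where "B \<in> P" "i \<in> B" using ex_block by blast
    then show ?thesis using 1 by (auto simp: block_vertices_def)
  next
    case 2 then show ?thesis by (auto simp: block_vertices_def)
  qed
qed

lemma block_perms_in:
  "p \<in> block_perms n P \<Longrightarrow> B \<in> P \<Longrightarrow> v \<in> block_vertices B \<Longrightarrow> p v \<in> block_vertices B"
  by (auto simp: block_perms_def)

lemma restrict_block_permutes:
  assumes p: "p \<in> block_perms n P" and B: "B \<in> P"
  shows "restrict_block B p permutes block_vertices B"
proof -
  let ?Y = "block_vertices B"
  have "p permutes KV n P" using p by (simp add: block_perms_def)
  then have "inj_on p ?Y" by (rule permutes_inj_on)
  then have inj: "inj_on (restrict_block B p) ?Y" by (auto simp: restrict_block_def inj_on_def)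
  have sub: "restrict_block B p ` ?Y \<subseteq> ?Y"
    using block_perms_in[OF p B] by (auto simp: restrict_block_def)
  have "restrict_block B p ` ?Y = ?Y"
    using card_subset_eq[OF finite_block_vertices[OF B] sub] card_image[OF inj] by simp
  with inj have "bij_betw (restrict_block B p) ?Y ?Y" by (simp add: bij_betw_def)
  then show ?thesis by (rule bij_imp_permutes) (simp add: restrict_block_def)
qed

lemma permutes_block_vertices_in_block_perms:
  assumes B: "B \<in> P" and h: "h permutes block_vertices B"
  shows "h \<in> block_perms n P"
proof -
  have "h permutes KV n P" using h block_vertices_subset_KV[OF B] by (rule permutes_subset)
  moreover have "\<forall>B'\<in>P. \<forall>v\<in>block_vertices B'. h v \<in> block_vertices B'"
  proof (intro ballI)
    fix B' v assume B': "B' \<in> P" and v: "v \<in> block_vertices B'"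
    show "h v \<in> block_vertices B'"
    proof (cases "B' = B")
      case True then show ?thesis using h v by (simp add: permutes_in_image)
    next
      case False
      then have "v \<notin> block_vertices B" using block_vertices_unique[OF B B'] v by auto
      then show ?thesis using h v by (simp add: permutes_not_in)
    qed
  qed
  ultimately show ?thesis by (simp add: block_perms_def)
qed

lemma inv_in_block_perms:
  assumes p: "p \<in> block_perms n P"
  shows "inv' p \<in> block_perms n P"
proof -
  have "inv' p v \<in> block_vertices B" if B: "B \<in> P" "v \<in> block_vertices B" for B v
  proof -
    obtain u where "u \<in> block_vertices B" "restrict_block B p u = v"
      using permutes_image[OF restrict_block_permutes[OF p B(1)]] B(2) by (metis imageE)
    then show ?thesis
      using p by (auto simp: restrict_block_def block_perms_def permutes_inverses)
  qed
  then show ?thesis using p by (auto simp: block_perms_def permutes_inv)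
qed

lemma id_in_block_perms: "id \<in> block_perms n P"
  by (simp add: block_perms_def permutes_id)

lemma block_perms_comp:
  "p \<in> block_perms n P \<Longrightarrow> q \<in> block_perms n P \<Longrightarrow> p \<circ> q \<in> block_perms n P"
  by (auto simp: block_perms_def permutes_compose)

lemma block_perms_eqI:
  assumes p: "p \<in> block_perms n P" and q: "q \<in> block_perms n P"
    and e: "\<And>B. B \<in> P \<Longrightarrow> restrict_block B p = restrict_block B q"
  shows "p = q"
proof
  fix v
  show "p v = q v"
  proof (cases "v \<in> KV n P")
    case True
    then obtain B where B: "B \<in> P" "v \<in> block_vertices B" using ex_block_vertices by blast
    from fun_cong[OF e[OF B(1)], of v] show ?thesis using B by (simp add: restrict_block_def)
  next
    case False
    then show ?thesis using p q by (auto simp: block_perms_def permutes_not_in)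
  qed
qed

definition block_of :: "vtx \<Rightarrow> nat set" where
  "block_of v = (SOME B. B \<in> P \<and> v \<in> block_vertices B)"

lemma block_of_eq: "B \<in> P \<Longrightarrow> v \<in> block_vertices B \<Longrightarrow> block_of v = B"
proof -
  assume B: "B \<in> P" "v \<in> block_vertices B"
  show ?thesis unfolding block_of_def
  proof (rule some_equality)
    show "B \<in> P \<and> v \<in> block_vertices B" using B by simp
    fix B' assume "B' \<in> P \<and> v \<in> block_vertices B'"
    then show "B' = B" using block_vertices_unique B by blast
  qed
qed

definition glue_blocks :: "(nat set \<Rightarrow> vtx \<Rightarrow> vtx) \<Rightarrow> vtx \<Rightarrow> vtx" where
  "glue_blocks f v = (if v \<in> KV n P then f (block_of v) v else v)"

lemma glue_blocks_block_perms:
  assumes f: "\<And>B. B \<in> P \<Longrightarrow> f B permutes block_vertices B"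
  shows "glue_blocks f \<in> block_perms n P"
    and "\<And>B. B \<in> P \<Longrightarrow> restrict_block B (glue_blocks f) = f B"
proof -
  have gY: "glue_blocks f v = f B v" if "B \<in> P" "v \<in> block_vertices B" for B v
    using that block_vertices_subset_KV block_of_eq by (auto simp: glue_blocks_def)
  have gi: "glue_blocks f v \<in> block_vertices B" if "B \<in> P" "v \<in> block_vertices B" for B v
    using gY[OF that] f[OF that(1)] that(2) by (simp add: permutes_in_image)
  have inj: "inj_on (glue_blocks f) (KV n P)"
  proof (rule inj_onI)
    fix v1 v2 assume v1: "v1 \<in> KV n P" and v2: "v2 \<in> KV n P"
      and e: "glue_blocks f v1 = glue_blocks f v2"
    obtain B1 where B1: "B1 \<in> P" "v1 \<in> block_vertices B1" using ex_block_vertices v1 by blast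
    obtain B2 where B2: "B2 \<in> P" "v2 \<in> block_vertices B2" using ex_block_vertices v2 by blast
    have "B1 = B2" using gi[OF B1] gi[OF B2] e block_vertices_unique[OF B1(1) B2(1)] by simp
    then show "v1 = v2" using e gY[OF B1] gY[OF B2] f[OF B1(1)] by (metis permutes_inj injD)
  qed
  have img: "glue_blocks f ` KV n P = KV n P"
  proof
    show "glue_blocks f ` KV n P \<subseteq> KV n P"
      using gi block_vertices_subset_KV ex_block_vertices by blast
    show "KV n P \<subseteq> glue_blocks f ` KV n P"
    proof
      fix u assume u: "u \<in> KV n P"
      obtain B where B: "B \<in> P" "u \<in> block_vertices B" using ex_block_vertices u by blast
      then obtain v where "v \<in> block_vertices B" "f B v = u" using f[OF B(1)]
        by (metis permutes_image image_iff)
      then show "u \<in> glue_blocks f ` KV n P"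
        using gY[OF B(1)] block_vertices_subset_KV[OF B(1)] by (metis image_eqI subsetD)
    qed
  qed
  have bb: "bij_betw (glue_blocks f) (KV n P) (KV n P)" by (simp add: bij_betw_def inj img)
  have "glue_blocks f permutes KV n P"
    by (rule bij_imp_permutes[OF bb]) (simp add: glue_blocks_def)
  then show "glue_blocks f \<in> block_perms n P" using gi by (simp add: block_perms_def)
  show "restrict_block B (glue_blocks f) = f B" if B: "B \<in> P" for B
  proof
    fix v show "restrict_block B (glue_blocks f) v = f B v"
      using gY[OF B] f[OF B] by (auto simp: restrict_block_def permutes_not_in)
  qed
qed

lemma card_block_perms_restrict:
  assumes T: "\<And>B. B \<in> P \<Longrightarrow> T B \<subseteq> {p. p permutes block_vertices B}"
  shows "card {p \<in> block_perms n P. \<forall>B\<in>P. restrict_block B p \<in> T B} = (\<Prod>B\<in>P. card (T B))"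
proof -
  let ?A = "{p \<in> block_perms n P. \<forall>B\<in>P. restrict_block B p \<in> T B}"
  let ?m = "\<lambda>p. restrict (\<lambda>B. restrict_block B p) P"
  have "bij_betw ?m ?A (PiE P T)"
  proof (rule bij_betwI')
    fix p q assume pA: "p \<in> ?A" and qA: "q \<in> ?A"
    show "(?m p = ?m q) = (p = q)"
    proof
      assume e: "?m p = ?m q"
      have "restrict_block B p = restrict_block B q" if "B \<in> P" for B
        using fun_cong[OF e, of B] that by simp
      then show "p = q" using block_perms_eqI pA qA by blast
    qed simp
  next
    fix p assume "p \<in> ?A" then show "?m p \<in> PiE P T" by (auto simp: PiE_def Pi_def)
  next
    fix f assume f: "f \<in> PiE P T"
    then have fp: "\<And>B. B \<in> P \<Longrightarrow> f B permutes block_vertices B"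
      using T by (auto simp: PiE_def Pi_def)
    note gl = glue_blocks_block_perms[OF fp]
    have "glue_blocks f \<in> ?A" using gl f by (auto simp: PiE_def Pi_def)
    moreover have "?m (glue_blocks f) = f"
    proof
      fix B show "?m (glue_blocks f) B = f B"
        using gl(2) f by (auto simp: PiE_def extensional_def)
    qed
    ultimately show "\<exists>p\<in>?A. f = ?m p" by (intro bexI[of _ "glue_blocks f"]) simp_all
  qed
  then have "card ?A = card (PiE P T)" by (rule bij_betw_same_card)
  also have "\<dots> = (\<Prod>B\<in>P. card (T B))" using finite_partition by (rule card_PiE)
  finally show ?thesis .
qed

lemma card_block_perms: "card (block_perms n P) = (\<Prod>B\<in>P. fact (card B + 1))"
proof -
  have "block_perms n P =
      {p \<in> block_perms n P. \<forall>B\<in>P. restrict_block B p \<in> {q. q permutes block_vertices B}}"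
    using restrict_block_permutes by auto
  then have "card (block_perms n P) = (\<Prod>B\<in>P. card {q. q permutes block_vertices B})"
    using card_block_perms_restrict[of "\<lambda>B. {q. q permutes block_vertices B}"] by simp
  also have "\<dots> = (\<Prod>B\<in>P. fact (card B + 1))"
    by (rule prod.cong) (auto simp: card_permutations finite_block_vertices card_block_vertices)
  finally show ?thesis .
qed

end

lemma group_Cox: "group (Cox n P)"
  unfolding Cox_def by (rule group.group_subgroup_generated[OF group_perm_group])

lemma Cox_simps [simp]: "monoid.mult (Cox n P) = (\<circ>)" "one (Cox n P) = id"
  by (simp_all add: Cox_def)

lemma Cox_comp:
  "a \<in> carrier (Cox n P) \<Longrightarrow> b \<in> carrier (Cox n P) \<Longrightarrow> a \<circ> b \<in> carrier (Cox n P)"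
  using monoid.m_closed[OF group.is_monoid[OF group_Cox]] by fastforce

lemma id_in_Cox: "id \<in> carrier (Cox n P)"
  using monoid.one_closed[OF group.is_monoid[OF group_Cox]] by simp

context block_partition
begin

lemma subgroup_block_perms: "subgroup (block_perms n P) (perm_group (KV n P))"
proof (rule group.subgroupI[OF group_perm_group])
  show "block_perms n P \<subseteq> carrier (perm_group (KV n P))" by (auto simp: block_perms_def)
  show "block_perms n P \<noteq> {}" using id_in_block_perms by blast
  fix a b assume a: "a \<in> block_perms n P" and "b \<in> block_perms n P"
  then show "a \<otimes>\<^bsub>perm_group (KV n P)\<^esub> b \<in> block_perms n P" by (simp add: block_perms_comp)
  show "inv\<^bsub>perm_group (KV n P)\<^esub> a \<in> block_perms n P"
    using a inv_in_block_perms by (simp add: perm_group_inv block_perms_def)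
qed

lemma K_gens_subset_block_perms: "K_gens n P \<subseteq> block_perms n P"
proof
  fix t assume "t \<in> K_gens n P"
  then obtain i B where t: "t = transpose (Inl i) (Inr B)" "B \<in> P" "i \<in> B"
    by (auto simp: K_gens_def)
  then have "t permutes block_vertices B" by (simp add: permutes_swap_id block_vertices_def)
  then show "t \<in> block_perms n P" using permutes_block_vertices_in_block_perms[OF t(2)] by simp
qed

lemma K_gens_in_Cox:
  assumes B: "B \<in> P" and i: "i \<in> B"
  shows "transpose (Inl i) (Inr B) \<in> carrier (Cox n P)"
proof -
  have "transpose (Inl i) (Inr B) \<in> K_gens n P"
    using B i block_subset[OF B] unfolding K_gens_def by blast
  then have "transpose (Inl i) (Inr B) \<in> carrier (perm_group (KV n P)) \<inter> K_gens n P"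
    using K_gens_subset_block_perms by (auto simp: block_perms_def)
  then show ?thesis unfolding Cox_def carrier_subgroup_generated by (rule generate.incl)
qed

lemma transpose_in_Cox:
  assumes B: "B \<in> P" and a: "a \<in> block_vertices B" and b: "b \<in> block_vertices B"
  shows "transpose a b \<in> carrier (Cox n P)"
proof -
  note g = K_gens_in_Cox[OF B]
  consider "a = b" | "a = Inr B" | "b = Inr B"
    | i j where "a = Inl i" "b = Inl j" "i \<noteq> j" "i \<in> B" "j \<in> B"
    using a b by (auto simp: block_vertices_def)
  then show ?thesis
  proof cases
    case 1 then show ?thesis using id_in_Cox by simp
  next
    case 2
    then show ?thesis using g b id_in_Cox by (auto simp: block_vertices_def transpose_commute)
  next
    case 3 then show ?thesis using g a id_in_Cox by (auto simp: block_vertices_def)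
  next
    case (4 i j)
    have "transpose a b =
        transpose (Inl i) (Inr B) \<circ> transpose (Inl j) (Inr B) \<circ> transpose (Inl i) (Inr B)"
      using 4 by (auto simp: fun_eq_iff transpose_def)
    then show ?thesis using g[OF 4(4)] g[OF 4(5)] Cox_comp by simp
  qed
qed

lemma block_perms_subset_Cox: "p \<in> block_perms n P \<Longrightarrow> p \<in> carrier (Cox n P)"
proof (induction "card {v. p v \<noteq> v}" arbitrary: p rule: less_induct)
  case less
  show ?case
  proof (cases "p = id")
    case True then show ?thesis using id_in_Cox by simp
  next
    case False
    then obtain v where v: "p v \<noteq> v" by (meson eq_id_iff)
    have pp: "p permutes KV n P" using less.prems by (simp add: block_perms_def)
    then have "v \<in> KV n P" using v by (meson permutes_not_in)
    then obtain B where B: "B \<in> P" "v \<in> block_vertices B" using ex_block_vertices by blast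
    then have pv: "p v \<in> block_vertices B" using block_perms_in[OF less.prems] by blast
    let ?t = "transpose v (p v)"
    have "?t \<in> block_perms n P"
      using permutes_block_vertices_in_block_perms[OF B(1) permutes_swap_id[OF B(2) pv]] .
    then have "?t \<circ> p \<in> block_perms n P" using less.prems by (rule block_perms_comp)
    then have "?t \<circ> p \<in> carrier (Cox n P)"
      by (rule less.hyps[OF card_moved_transpose_comp_less[OF pp finite_KV v]])
    with transpose_in_Cox[OF B pv] have "?t \<circ> (?t \<circ> p) \<in> carrier (Cox n P)" by (rule Cox_comp)
    then show ?thesis by (simp add: comp_assoc[symmetric])
  qed
qed

lemma Cox_carrier: "carrier (Cox n P) = block_perms n P"
  using group.subgroup_generated_minimal[OF group_perm_group subgroup_block_perms
      K_gens_subset_block_perms] block_perms_subset_Cox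
  by (auto simp: Cox_def)

end

section \<open>The block sizes are determined by the group\<close>

definition block_centralizer :: "nat \<Rightarrow> nat set set \<Rightarrow> nat set \<Rightarrow> (vtx \<Rightarrow> vtx) set" where
  "block_centralizer n P B =
     {z \<in> block_perms n P. restrict_block B z \<in> socle_centralizer (block_vertices B)}"

lemma restrict_block_id [simp]: "restrict_block B id = id"
  by (simp add: restrict_block_def fun_eq_iff)

lemma restrict_block_permutes_block_vertices:
  "h permutes block_vertices B \<Longrightarrow> restrict_block B h = h"
  by (auto simp: restrict_block_def fun_eq_iff permutes_not_in)

context block_partition
begin

lemma restrict_block_other:
  assumes "B \<in> P" "B' \<in> P" "B \<noteq> B'" "h permutes block_vertices B"
  shows "restrict_block B' h = id"
proof
  fix v
  have "h v = v" if "v \<in> block_vertices B'"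
    using that assms block_vertices_unique permutes_not_in by metis
  then show "restrict_block B' h v = id v" by (simp add: restrict_block_def)
qed

lemma restrict_block_comp:
  assumes "B \<in> P" "p \<in> block_perms n P" "q \<in> block_perms n P"
  shows "restrict_block B (p \<circ> q) = restrict_block B p \<circ> restrict_block B q"
  using assms block_perms_in[OF assms(3,1)] by (auto simp: restrict_block_def fun_eq_iff)

lemma conj_centralizer_Cox:
  assumes x: "x \<in> block_perms n P"
  shows "conj_centralizer (Cox n P) x = {z \<in> block_perms n P. \<forall>B\<in>P.
    restrict_block B z \<in> conj_centralizer (perm_group (block_vertices B)) (restrict_block B x)}"
proof -
  let ?rs = restrict_block
  have comp3: "?rs B (z \<circ> (g \<circ> x \<circ> h)) = ?rs B z \<circ> (?rs B g \<circ> ?rs B x \<circ> ?rs B h)"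
    "?rs B ((g \<circ> x \<circ> h) \<circ> z) = (?rs B g \<circ> ?rs B x \<circ> ?rs B h) \<circ> ?rs B z"
    if "B \<in> P" "z \<in> block_perms n P" "g \<in> block_perms n P" "h \<in> block_perms n P" for B z g h
    using that x by (simp_all add: restrict_block_comp block_perms_comp)
  show ?thesis
  proof (intro equalityI subsetI CollectI conjI ballI)
    fix z assume z: "z \<in> conj_centralizer (Cox n P) x"
    then show zG: "z \<in> block_perms n P" by (simp add: conj_centralizer_def Cox_carrier)
    fix B assume B: "B \<in> P"
    show "?rs B z \<in> conj_centralizer (perm_group (block_vertices B)) (?rs B x)"
      unfolding conj_centralizer_perm_group
    proof (intro conjI allI impI)
      show "?rs B z permutes block_vertices B" by (rule restrict_block_permutes[OF zG B])
      fix g assume g: "g permutes block_vertices B"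
      then have g': "inv' g permutes block_vertices B" by (rule permutes_inv)
      have gG: "g \<in> block_perms n P" "inv' g \<in> block_perms n P"
        using permutes_block_vertices_in_block_perms[OF B] g g' by blast+
      then have "z \<circ> (g \<circ> x \<circ> inv' g) = (g \<circ> x \<circ> inv' g) \<circ> z"
        using z permutes_inv_o(1)[OF g] by (simp add: conj_centralizer_def Cox_carrier)
      then show "?rs B z \<circ> (g \<circ> ?rs B x \<circ> inv' g) = (g \<circ> ?rs B x \<circ> inv' g) \<circ> ?rs B z"
        using comp3[OF B zG gG]
        by (simp add: restrict_block_permutes_block_vertices[OF g]
            restrict_block_permutes_block_vertices[OF g'])
    qed
  next
    fix z assume z: "z \<in> {z \<in> block_perms n P. \<forall>B\<in>P.
      ?rs B z \<in> conj_centralizer (perm_group (block_vertices B)) (?rs B x)}"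
    then have zG: "z \<in> block_perms n P" by simp
    have "z \<circ> (g \<circ> x \<circ> h) = (g \<circ> x \<circ> h) \<circ> z"
      if g: "g \<in> block_perms n P" and h: "h \<in> block_perms n P" and gh: "g \<circ> h = id" for g h
    proof (rule block_perms_eqI)
      show "z \<circ> (g \<circ> x \<circ> h) \<in> block_perms n P" "(g \<circ> x \<circ> h) \<circ> z \<in> block_perms n P"
        using zG g h x by (simp_all add: block_perms_comp)
      fix B assume B: "B \<in> P"
      have "?rs B g \<circ> ?rs B h = id" using restrict_block_comp[OF B g h] gh by simp
      then show "?rs B (z \<circ> (g \<circ> x \<circ> h)) = ?rs B ((g \<circ> x \<circ> h) \<circ> z)"
        using z B restrict_block_permutes[OF g B] restrict_block_permutes[OF h B]
        by (simp add: comp3[OF B zG g h] conj_centralizer_def)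
    qed
    then show "z \<in> conj_centralizer (Cox n P) x"
      using zG by (simp add: conj_centralizer_def Cox_carrier)
  qed
qed

lemma conj_centralizer_Cox_subset_block_centralizer:
  assumes x: "x \<in> block_perms n P" and B: "B \<in> P" "2 \<le> card B"
    and xB: "restrict_block B x \<noteq> id"
  shows "conj_centralizer (Cox n P) x \<subseteq> block_centralizer n P B"
  using conj_centralizer_subset_socle_centralizer[OF finite_block_vertices[OF B(1)] _
      restrict_block_permutes[OF x B(1)] xB] B card_block_vertices[OF B(1)]
  by (auto simp: conj_centralizer_Cox[OF x] block_centralizer_def)

lemma conj_centralizer_Cox_eq_carrier:
  assumes x: "x \<in> block_perms n P"
    and triv: "\<And>B. B \<in> P \<Longrightarrow> 2 \<le> card B \<Longrightarrow> restrict_block B x = id"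
  shows "conj_centralizer (Cox n P) x = block_perms n P"
proof -
  have "conj_centralizer (perm_group (block_vertices B)) (restrict_block B x)
      = {w. w permutes block_vertices B}" if B: "B \<in> P" for B
  proof (cases "2 \<le> card B")
    case True
    then show ?thesis using triv[OF B] by (simp add: conj_centralizer_perm_group_id)
  next
    case False
    moreover have "card B \<noteq> 0" using finite_block[OF B] block_nonempty[OF B] by simp
    ultimately have "card (block_vertices B) = 2" using card_block_vertices[OF B] by simp
    then show ?thesis
      using conj_centralizer_perm_group_card_2 restrict_block_permutes[OF x B] by blast
  qed
  then show ?thesis
    using restrict_block_permutes by (auto simp: conj_centralizer_Cox[OF x])
qed

lemma conj_centralizer_Cox_eq_block_centralizer:
  assumes B: "B \<in> P" "2 \<le> card B"
  obtains x where "x \<in> block_perms n P" "conj_centralizer (Cox n P) x = block_centralizer n P B"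
proof -
  obtain \<pi> where \<pi>: "\<pi> permutes block_vertices B" "\<pi> \<noteq> id"
    "conj_centralizer (perm_group (block_vertices B)) \<pi> = socle_centralizer (block_vertices B)"
    using exists_conj_centralizer_eq_socle_centralizer[OF finite_block_vertices[OF B(1)]]
      card_block_vertices[OF B(1)] B(2) by auto
  have x: "\<pi> \<in> block_perms n P" using permutes_block_vertices_in_block_perms[OF B(1) \<pi>(1)] .
  have "restrict_block B' z
        \<in> conj_centralizer (perm_group (block_vertices B')) (restrict_block B' \<pi>)
      \<longleftrightarrow> (B' = B \<longrightarrow> restrict_block B z \<in> socle_centralizer (block_vertices B))"
    if "z \<in> block_perms n P" "B' \<in> P" for z B'
    using \<pi> restrict_block_permutes_block_vertices[OF \<pi>(1)] restrict_block_other[OF B(1) _ _ \<pi>(1)]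
      restrict_block_permutes[OF that] that(2)
    by (cases "B' = B") (simp_all add: conj_centralizer_perm_group_id)
  then have "conj_centralizer (Cox n P) \<pi> = block_centralizer n P B"
    using B(1) by (auto simp: conj_centralizer_Cox[OF x] block_centralizer_def)
  with x that show ?thesis by blast
qed

lemma transposition_separates_block_centralizers:
  assumes B: "B \<in> P" "2 \<le> card B"
  obtains t where "t \<in> block_perms n P" "t \<notin> block_centralizer n P B"
    "\<And>B'. B' \<in> P \<Longrightarrow> B' \<noteq> B \<Longrightarrow> t \<in> block_centralizer n P B'"
proof -
  obtain i where i: "i \<in> B" using card_less_imp_ex_notin[of "{}" B] B(2) by force
  obtain j where j: "j \<in> B" "j \<notin> {i}" using card_less_imp_ex_notin[of "{i}" B] B(2) by force
  from i j have ij: "i \<in> B" "j \<in> B" "i \<noteq> j" by auto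
  define t where "t = transpose (Inr B) (Inl i)"
  have t: "t permutes block_vertices B"
    using ij by (simp add: t_def block_vertices_def permutes_swap_id)
  then have tG: "t \<in> block_perms n P" by (rule permutes_block_vertices_in_block_perms[OF B(1)])
  have "t \<noteq> id" "t (Inl j) = Inl j" "Inl j \<in> block_vertices B"
    using ij by (auto simp: t_def transpose_eq_id_iff block_vertices_def)
  then have "t \<notin> socle_centralizer (block_vertices B)"
    by (auto simp: socle_centralizer_def fixpoint_free_def)
  then have "t \<notin> block_centralizer n P B"
    by (simp add: block_centralizer_def restrict_block_permutes_block_vertices[OF t])
  moreover have "t \<in> block_centralizer n P B'" if "B' \<in> P" "B' \<noteq> B" for B'
    using restrict_block_other[OF B(1) that(1) _ t] that tG
    by (auto simp: block_centralizer_def socle_centralizer_def permutes_id)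
  ultimately show ?thesis using that tG by blast
qed

lemma block_centralizer_subset_iff:
  assumes "B \<in> P" "B' \<in> P" "2 \<le> card B'"
  shows "block_centralizer n P B \<subseteq> block_centralizer n P B' \<longleftrightarrow> B = B'"
proof
  obtain t where "t \<notin> block_centralizer n P B'"
    "\<And>B''. B'' \<in> P \<Longrightarrow> B'' \<noteq> B' \<Longrightarrow> t \<in> block_centralizer n P B''"
    using transposition_separates_block_centralizers[OF assms(2,3)] by metis
  then show "block_centralizer n P B \<subseteq> block_centralizer n P B' \<Longrightarrow> B = B'"
    using assms(1) by blast
qed simp

lemma max_conj_centralizers_Cox:
  "max_conj_centralizers (Cox n P) = block_centralizer n P ` {B \<in> P. 2 \<le> card B}"
proof -
  let ?C = "conj_centralizers (Cox n P)"
  have in_C: "block_centralizer n P B \<in> ?C" if B: "B \<in> P" "2 \<le> card B" for B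
  proof -
    obtain x where "x \<in> block_perms n P" "conj_centralizer (Cox n P) x = block_centralizer n P B"
      using conj_centralizer_Cox_eq_block_centralizer[OF B] .
    moreover obtain t where "t \<in> block_perms n P" "t \<notin> block_centralizer n P B"
      using transposition_separates_block_centralizers[OF B] by metis
    then have "block_centralizer n P B \<noteq> block_perms n P" by blast
    ultimately show ?thesis by (auto simp: conj_centralizers_def Cox_carrier)
  qed
  have below: "\<exists>B\<in>P. 2 \<le> card B \<and> D \<subseteq> block_centralizer n P B" if D: "D \<in> ?C" for D
  proof -
    obtain x where x: "x \<in> block_perms n P" "D = conj_centralizer (Cox n P) x" "D \<noteq> block_perms n P"
      using D by (auto simp: conj_centralizers_def Cox_carrier)
    then obtain B where "B \<in> P" "2 \<le> card B" "restrict_block B x \<noteq> id"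
      using conj_centralizer_Cox_eq_carrier[OF x(1)] by metis
    then show ?thesis using conj_centralizer_Cox_subset_block_centralizer[OF x(1)] x(2) by blast
  qed
  show ?thesis
  proof
    show "max_conj_centralizers (Cox n P) \<subseteq> block_centralizer n P ` {B \<in> P. 2 \<le> card B}"
    proof
      fix D assume D: "D \<in> max_conj_centralizers (Cox n P)"
      then have "D \<in> ?C" by (simp add: max_conj_centralizers_def)
      then obtain B where B: "B \<in> P" "2 \<le> card B" "D \<subseteq> block_centralizer n P B"
        using below by blast
      then have "block_centralizer n P B = D"
        using D in_C[OF B(1,2)] unfolding max_conj_centralizers_def by blast
      with B show "D \<in> block_centralizer n P ` {B \<in> P. 2 \<le> card B}" by blast
    qed
    show "block_centralizer n P ` {B \<in> P. 2 \<le> card B} \<subseteq> max_conj_centralizers (Cox n P)"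
    proof
      fix D assume "D \<in> block_centralizer n P ` {B \<in> P. 2 \<le> card B}"
      then obtain B where B: "B \<in> P" "2 \<le> card B" "D = block_centralizer n P B" by blast
      have "E = D" if E: "E \<in> ?C" "D \<subseteq> E" for E
      proof -
        obtain B' where B': "B' \<in> P" "2 \<le> card B'" "E \<subseteq> block_centralizer n P B'"
          using below[OF E(1)] by blast
        then have "B = B'" using block_centralizer_subset_iff[OF B(1) B'(1,2)] B(3) E(2) by blast
        then show ?thesis using B(3) B'(3) E(2) by blast
      qed
      then show "D \<in> max_conj_centralizers (Cox n P)"
        using in_C[OF B(1,2)] B(3) by (simp add: max_conj_centralizers_def)
    qed
  qed
qed

lemma card_block_perms_eq:
  assumes B: "B \<in> P" "2 \<le> card B"
  shows "card (block_perms n P) =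
    socle_centralizer_index (card B + 1) * card (block_centralizer n P B)"
proof -
  define T where "T B' = (if B' = B then socle_centralizer (block_vertices B)
    else {q. q permutes block_vertices B'})" for B'
  have T: "T B' \<subseteq> {q. q permutes block_vertices B'}" for B'
    by (auto simp: T_def socle_centralizer_def)
  let ?R = "\<Prod>B'\<in>P - {B}. fact (card B' + 1) :: nat"
  have "block_centralizer n P B = {p \<in> block_perms n P. \<forall>B'\<in>P. restrict_block B' p \<in> T B'}"
    using restrict_block_permutes B by (auto simp: block_centralizer_def T_def)
  then have "card (block_centralizer n P B) = (\<Prod>B'\<in>P. card (T B'))"
    using card_block_perms_restrict[OF T] by simp
  also have "\<dots> = card (T B) * (\<Prod>B'\<in>P - {B}. card (T B'))"
    using prod.remove[OF finite_partition B(1)] .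
  also have "card (T B) = card (socle_centralizer (block_vertices B))" by (simp add: T_def)
  also have "(\<Prod>B'\<in>P - {B}. card (T B')) = ?R"
    by (rule prod.cong)
      (auto simp: T_def card_permutations finite_block_vertices card_block_vertices)
  finally have "card (block_centralizer n P B) = card (socle_centralizer (block_vertices B)) * ?R" .
  moreover have "card (block_perms n P) = fact (card B + 1) * ?R"
    using card_block_perms prod.remove[OF finite_partition B(1)] by simp
  moreover have "fact (card B + 1) =
      socle_centralizer_index (card B + 1) * card (socle_centralizer (block_vertices B))"
    using fact_eq_socle_centralizer_index[OF finite_block_vertices[OF B(1)]] B
      card_block_vertices[OF B(1)]
    by simp
  ultimately show ?thesis by simp
qed

lemma card_blocks_eq_card_max_conj_centralizers:
  assumes k: "2 \<le> k"
  shows "card {B \<in> P. card B = k} = card {D \<in> max_conj_centralizers (Cox n P).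
    card (carrier (Cox n P)) = socle_centralizer_index (k + 1) * card D}"
proof -
  have pos: "0 < card (block_centralizer n P B)" if "B \<in> P" for B
  proof -
    have "block_centralizer n P B \<subseteq> block_perms n P" by (auto simp: block_centralizer_def)
    moreover have "finite (block_perms n P)"
      using finite_permutations[OF finite_KV]
      by (rule finite_subset[rotated]) (auto simp: block_perms_def)
    moreover have "id \<in> block_centralizer n P B"
      using id_in_block_perms by (simp add: block_centralizer_def socle_centralizer_def permutes_id)
    ultimately show ?thesis by (metis card_gt_0_iff empty_iff finite_subset)
  qed
  have index: "card (block_perms n P) =
      socle_centralizer_index (k + 1) * card (block_centralizer n P B)
      \<longleftrightarrow> card B = k" if B: "B \<in> P" "2 \<le> card B" for B
  proof
    assume "card (block_perms n P) =
      socle_centralizer_index (k + 1) * card (block_centralizer n P B)"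
    then have "socle_centralizer_index (card B + 1) = socle_centralizer_index (k + 1)"
      using card_block_perms_eq[OF B] pos[OF B(1)] by simp
    from inj_onD[OF inj_on_socle_centralizer_index this] show "card B = k"
      using B(2) k by simp
  qed (use card_block_perms_eq[OF B] in simp)
  have "{D \<in> max_conj_centralizers (Cox n P).
        card (carrier (Cox n P)) = socle_centralizer_index (k + 1) * card D}
      = block_centralizer n P ` {B \<in> P. card B = k}"
    unfolding max_conj_centralizers_Cox Cox_carrier using index k by force
  moreover have "inj_on (block_centralizer n P) {B \<in> P. card B = k}"
  proof (rule inj_onI)
    fix B B' assume "B \<in> {B \<in> P. card B = k}" "B' \<in> {B \<in> P. card B = k}"
      and "block_centralizer n P B = block_centralizer n P B'"
    then show "B = B'" using block_centralizer_subset_iff[of B B'] k by simp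
  qed
  ultimately show ?thesis by (simp add: card_image)
qed

end

lemma bij_betw_of_card_fibres_eq:
  assumes "finite A" "finite A'" and fibres: "\<And>k. card {a\<in>A. c a = k} = card {a\<in>A'. c' a = k}"
  obtains \<beta> where "bij_betw \<beta> A A'" "\<And>a. a \<in> A \<Longrightarrow> c' (\<beta> a) = c a"
proof -
  have "\<forall>k. \<exists>f. bij_betw f {a\<in>A. c a = k} {a\<in>A'. c' a = k}"
    using fibres assms(1,2) by (auto intro: finite_same_card_bij)
  then obtain F where F: "\<And>k. bij_betw (F k) {a\<in>A. c a = k} {a\<in>A'. c' a = k}" by metis
  define \<beta> where "\<beta> a = F (c a) a" for a
  have \<beta>: "\<beta> a \<in> A' \<and> c' (\<beta> a) = c a" if "a \<in> A" for a
    using that F[of "c a"] by (auto simp: \<beta>_def bij_betw_def)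
  have "bij_betw \<beta> A A'"
  proof (rule bij_betw_imageI)
    show "inj_on \<beta> A"
    proof (rule inj_onI)
      fix a1 a2 assume a: "a1 \<in> A" "a2 \<in> A" "\<beta> a1 = \<beta> a2"
      then have "c a1 = c a2" using \<beta> by metis
      with a F[of "c a1"] show "a1 = a2" by (auto simp: \<beta>_def bij_betw_def dest: inj_onD)
    qed
    show "\<beta> ` A = A'"
    proof
      show "\<beta> ` A \<subseteq> A'" using \<beta> by auto
      show "A' \<subseteq> \<beta> ` A"
      proof
        fix a' assume "a' \<in> A'"
        then have "a' \<in> F (c' a') ` {a\<in>A. c a = c' a'}"
          using F[of "c' a'"] by (auto simp: bij_betw_def)
        then show "a' \<in> \<beta> ` A" by (force simp: \<beta>_def)
      qed
    qed
  qed
  then show ?thesis using that \<beta> by blast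
qed

lemma prod_eq_of_card_fibres_eq:
  assumes "finite A" "finite A'" "\<And>k. card {a\<in>A. c a = k} = card {a\<in>A'. c' a = k}"
  shows "(\<Prod>a\<in>A. f (c a)) = (\<Prod>a\<in>A'. f (c' a))"
proof -
  obtain \<beta> where \<beta>: "bij_betw \<beta> A A'" "\<And>a. a \<in> A \<Longrightarrow> c' (\<beta> a) = c a"
    using bij_betw_of_card_fibres_eq[OF assms] by blast
  have "(\<Prod>a\<in>A'. f (c' a)) = (\<Prod>a\<in>A. f (c' (\<beta> a)))"
    using prod.reindex_bij_betw[OF \<beta>(1), of "\<lambda>a. f (c' a)"] by simp
  also have "\<dots> = (\<Prod>a\<in>A. f (c a))" using \<beta>(2) by simp
  finally show ?thesis by simp
qed

context block_partition
begin

lemma card_block_pos: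
  assumes "B \<in> P"
  shows "0 < card B"
  using finite_block[OF assms] block_nonempty[OF assms] by (simp add: card_gt_0_iff)

lemma card_block_perms_split:
  "card (block_perms n P) =
     2 ^ card {B \<in> P. card B = 1} * (\<Prod>B\<in>{B \<in> P. 2 \<le> card B}. fact (card B + 1))"
proof -
  have "(\<Prod>B\<in>P. fact (card B + 1) :: nat) = (\<Prod>B\<in>P \<inter> {B. card B = 1}. fact (card B + 1))
      * (\<Prod>B\<in>P - {B. card B = 1}. fact (card B + 1))"
    by (rule prod.Int_Diff[OF finite_partition])
  also have "P \<inter> {B. card B = 1} = {B \<in> P. card B = 1}" by blast
  also have "P - {B. card B = 1} = {B \<in> P. 2 \<le> card B}"
  proof (intro equalityI subsetI)
    fix B assume "B \<in> P - {B. card B = 1}"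
    moreover from this have "0 < card B" using card_block_pos by blast
    ultimately show "B \<in> {B \<in> P. 2 \<le> card B}" by simp
  qed auto
  also have "(\<Prod>B\<in>{B \<in> P. card B = 1}. fact (card B + 1) :: nat) = 2 ^ card {B \<in> P. card B = 1}"
    by (simp add: numeral_2_eq_2)
  finally show ?thesis by (simp only: card_block_perms)
qed

end

lemma card_blocks_eq_of_card_block_perms_eq:
  assumes A: "block_partition n P" and A': "block_partition n' P'"
    and card_eq: "card (block_perms n P) = card (block_perms n' P')"
    and big: "\<And>k. 2 \<le> k \<Longrightarrow> card {B \<in> P. card B = k} = card {B \<in> P'. card B = k}"
  shows "card {B \<in> P. card B = k} = card {B \<in> P'. card B = k}"
proof -
  interpret A: block_partition n P by (rule A)
  interpret A': block_partition n' P' by (rule A')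
  have "{B \<in> {B \<in> Q. 2 \<le> card B}. card B = k} = (if 2 \<le> k then {B \<in> Q. card B = k} else {})"
    for Q :: "nat set set" and k by auto
  then have "card {B \<in> {B \<in> P. 2 \<le> card B}. card B = k}
      = card {B \<in> {B \<in> P'. 2 \<le> card B}. card B = k}"
    for k using big[of k] by presburger
  then have prod_eq: "(\<Prod>B\<in>{B \<in> P'. 2 \<le> card B}. fact (card B + 1) :: nat)
      = (\<Prod>B\<in>{B \<in> P. 2 \<le> card B}. fact (card B + 1))"
    using A.finite_partition A'.finite_partition by (intro prod_eq_of_card_fibres_eq) auto
  have "2 ^ card {B \<in> P. card B = 1} * (\<Prod>B\<in>{B \<in> P. 2 \<le> card B}. fact (card B + 1))
      = 2 ^ card {B \<in> P'. card B = 1} * (\<Prod>B\<in>{B \<in> P. 2 \<le> card B}. fact (card B + 1) :: nat)"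
    using card_eq unfolding A.card_block_perms_split A'.card_block_perms_split prod_eq .
  moreover have "0 < (\<Prod>B\<in>{B \<in> P. 2 \<le> card B}. fact (card B + 1) :: nat)" by (simp add: prod_pos)
  ultimately have "(2 :: nat) ^ card {B \<in> P. card B = 1} = 2 ^ card {B \<in> P'. card B = 1}" by simp
  then have ones: "card {B \<in> P. card B = 1} = card {B \<in> P'. card B = 1}" by simp
  have zeros: "{B \<in> P. card B = 0} = {}" "{B \<in> P'. card B = 0} = {}"
    by (auto dest: A.card_block_pos A'.card_block_pos)
  consider "k = 0" | "k = 1" | "2 \<le> k" by linarith
  then show ?thesis
    by cases (simp_all only: zeros ones big)
qed

section \<open>Relabeling the points\<close>

lemma exists_relabeling:
  fixes n n' :: nat
  assumes P: "partition_on {1..n+1} P" and P': "partition_on {1..n'+1} P'"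
    and fibres: "\<And>k. card {B \<in> P. card B = k} = card {B \<in> P'. card B = k}"
  obtains \<sigma> where "bij_betw \<sigma> {1..n+1} {1..n'+1}" "(`) \<sigma> ` P = P'"
proof -
  interpret A: block_partition n P using P by unfold_locales
  interpret A': block_partition n' P' using P' by unfold_locales
  obtain \<beta> where \<beta>: "bij_betw \<beta> P P'" "\<And>B. B \<in> P \<Longrightarrow> card (\<beta> B) = card B"
    using bij_betw_of_card_fibres_eq[OF A.finite_partition A'.finite_partition fibres] by blast
  have "\<forall>B\<in>P. \<exists>\<psi>. bij_betw \<psi> B (\<beta> B)"
  proof
    fix B assume B: "B \<in> P"
    show "\<exists>\<psi>. bij_betw \<psi> B (\<beta> B)"
      using A.finite_block[OF B] A'.finite_block[OF bij_betw_apply[OF \<beta>(1) B]] \<beta>(2)[OF B, symmetric]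
      by (rule finite_same_card_bij)
  qed
  then obtain \<Psi> where "\<forall>B\<in>P. bij_betw (\<Psi> B) B (\<beta> B)" by (auto dest: bchoice)
  then have \<Psi>: "\<And>B. B \<in> P \<Longrightarrow> bij_betw (\<Psi> B) B (\<beta> B)" by blast
  define \<sigma> where "\<sigma> i = \<Psi> (THE B. B \<in> P \<and> i \<in> B) i" for i
  have block_of: "(THE B. B \<in> P \<and> i \<in> B) = B" if "B \<in> P" "i \<in> B" for i B
    using that A.block_unique by (intro the_equality) auto
  have \<sigma>B: "\<sigma> ` B = \<beta> B" if B: "B \<in> P" for B
  proof -
    have "\<sigma> ` B = \<Psi> B ` B" using block_of[OF B] by (auto simp: \<sigma>_def)
    also have "\<dots> = \<beta> B" using \<Psi>[OF B] by (simp add: bij_betw_def)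
    finally show ?thesis .
  qed
  have U: "{1..n+1} = \<Union>P" "{1..n'+1} = \<Union>P'"
    using partition_onD1[OF P] partition_onD1[OF P'] by simp_all
  have "bij_betw \<sigma> {1..n+1} {1..n'+1}"
  proof (rule bij_betw_imageI)
    show "inj_on \<sigma> {1..n+1}"
    proof (rule inj_onI)
      fix i j assume "i \<in> {1..n+1}" "j \<in> {1..n+1}" and e: "\<sigma> i = \<sigma> j"
      then obtain B1 B2 where B: "B1 \<in> P" "i \<in> B1" "B2 \<in> P" "j \<in> B2" unfolding U by blast
      have "\<sigma> i \<in> \<beta> B1" "\<sigma> j \<in> \<beta> B2" using \<sigma>B B by blast+
      then have "\<beta> B1 = \<beta> B2"
        using A'.block_unique[OF bij_betw_apply[OF \<beta>(1) B(1)] bij_betw_apply[OF \<beta>(1) B(3)]] e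
        by simp
      then have B12: "B1 = B2" using \<beta>(1) B(1,3) by (auto simp: bij_betw_def dest: inj_onD)
      then have "\<Psi> B1 i = \<Psi> B1 j" using e block_of B by (simp add: \<sigma>_def)
      with \<Psi>[OF B(1)] B B12 show "i = j" by (auto simp: bij_betw_def dest: inj_onD)
    qed
    have "\<sigma> ` \<Union>P = \<Union>P'"
      using \<sigma>B \<beta>(1) by (auto simp: bij_betw_def image_Union)
    then show "\<sigma> ` {1..n+1} = {1..n'+1}" by (simp only: U)
  qed
  moreover have "(`) \<sigma> ` P = P'"
    using \<sigma>B \<beta>(1) by (auto simp: bij_betw_def)
  ultimately show ?thesis using that by blast
qed

lemma image_downward_closure:
  "(`) \<phi> ` {F. F \<noteq> {} \<and> (\<exists>S\<in>Ss. F \<subseteq> S)} = {F. F \<noteq> {} \<and> (\<exists>S\<in>(`) \<phi> ` Ss. F \<subseteq> S)}"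
proof (intro equalityI subsetI)
  fix F' assume "F' \<in> {F. F \<noteq> {} \<and> (\<exists>S\<in>(`) \<phi> ` Ss. F \<subseteq> S)}"
  then obtain S where S: "S \<in> Ss" "F' \<noteq> {}" "F' \<subseteq> \<phi> ` S" by blast
  then have "F' = \<phi> ` {v \<in> S. \<phi> v \<in> F'}" by blast
  with S show "F' \<in> (`) \<phi> ` {F. F \<noteq> {} \<and> (\<exists>S\<in>Ss. F \<subseteq> S)}" by blast
qed blast

lemma inj_on_relabel:
  assumes P: "partition_on {1..n+1} P" and \<sigma>: "inj_on \<sigma> {1..n+1}"
  shows "inj_on (map_sum \<sigma> ((`) \<sigma>)) (KV n P)"
proof -
  have "P \<subseteq> Pow {1..n+1}" using P by (auto simp: partition_on_def)
  with inj_on_image_Pow[OF \<sigma>] have "inj_on ((`) \<sigma>) P" by (rule inj_on_subset)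
  show ?thesis
  proof (rule inj_onI)
    fix u v assume "u \<in> KV n P" "v \<in> KV n P" "map_sum \<sigma> ((`) \<sigma>) u = map_sum \<sigma> ((`) \<sigma>) v"
    with \<sigma> \<open>inj_on ((`) \<sigma>) P\<close> show "u = v"
      unfolding KV_def by (elim UnE imageE) (auto dest: inj_onD)
  qed
qed

lemma relabel_facets:
  assumes P: "partition_on {1..n+1} P"
    and \<sigma>: "bij_betw \<sigma> {1..n+1} {1..n'+1}" and P': "(`) \<sigma> ` P = P'"
  shows "(`) (map_sum \<sigma> ((`) \<sigma>)) ` K_facets n P \<subseteq> K_facets n' P'"
proof
  let ?\<phi> = "map_sum \<sigma> ((`) \<sigma>)"
  let ?\<tau> = "inv_into {1..n+1} \<sigma>"
  have \<tau>: "bij_betw ?\<tau> {1..n'+1} {1..n+1}" using \<sigma> by (rule bij_betw_inv_into)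
  have \<sigma>\<tau>: "\<sigma> (?\<tau> j) = j" if "j \<in> {1..n'+1}" for j
    using \<sigma> that by (simp add: bij_betw_inv_into_right)
  fix S' assume "S' \<in> (`) ?\<phi> ` K_facets n P"
  then obtain y where S': "S' = ?\<phi> ` y ` {1..n+1}"
    and y: "\<forall>i\<in>{1..n+1}. y i = Inl i \<or> (\<exists>B\<in>P. i \<in> B \<and> y i = Inr B)"
    and y_inj: "inj_on y {1..n+1}"
    by (auto simp: K_facets_def)
  define y' where "y' j = ?\<phi> (y (?\<tau> j))" for j
  have "y' ` {1..n'+1} = ?\<phi> ` y ` ?\<tau> ` {1..n'+1}" by (auto simp: y'_def image_image)
  then have img: "y' ` {1..n'+1} = S'" using \<tau> S' by (simp add: bij_betw_def)
  have "y' j = Inl j \<or> (\<exists>B\<in>P'. j \<in> B \<and> y' j = Inr B)" if j: "j \<in> {1..n'+1}" for j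
  proof -
    have i: "?\<tau> j \<in> {1..n+1}" using \<tau> j by (auto simp: bij_betw_def)
    from y i consider "y (?\<tau> j) = Inl (?\<tau> j)" | B where "B \<in> P" "?\<tau> j \<in> B" "y (?\<tau> j) = Inr B"
      by blast
    then show ?thesis
    proof cases
      case 1 then show ?thesis using \<sigma>\<tau>[OF j] by (simp add: y'_def)
    next
      case (2 B)
      then have "j \<in> \<sigma> ` B" "\<sigma> ` B \<in> P'" using \<sigma>\<tau>[OF j] P' by (metis image_eqI)+
      then show ?thesis using 2 by (auto simp: y'_def)
    qed
  qed
  moreover have "inj_on y' {1..n'+1}"
  proof -
    have "y i \<in> KV n P" if i: "i \<in> {1..n+1}" for i
      using y[rule_format, OF i] i unfolding KV_def by blast
    then have "inj_on ?\<phi> (y ` {1..n+1})"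
      by (intro inj_on_subset[OF inj_on_relabel[OF P bij_betw_imp_inj_on[OF \<sigma>]]]) auto
    then have "inj_on (?\<phi> \<circ> y) {1..n+1}" using y_inj by (rule comp_inj_on[rotated])
    moreover have "?\<tau> ` {1..n'+1} = {1..n+1}" using \<tau> by (simp add: bij_betw_def)
    ultimately have "inj_on ((?\<phi> \<circ> y) \<circ> ?\<tau>) {1..n'+1}"
      using bij_betw_imp_inj_on[OF \<tau>] by (auto intro: comp_inj_on)
    then show ?thesis by (simp add: y'_def[abs_def] comp_def)
  qed
  ultimately show "S' \<in> K_facets n' P'"
    unfolding K_facets_def using img by blast
qed

lemma K_facets_subset_KV: "S \<in> K_facets n P \<Longrightarrow> S \<subseteq> KV n P"
  by (auto simp: K_facets_def KV_def)

lemma complex_iso_of_relabeling: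
  fixes n n' :: nat
  assumes P: "partition_on {1..n+1} P" and P': "partition_on {1..n'+1} P'"
    and \<sigma>: "bij_betw \<sigma> {1..n+1} {1..n'+1}" and \<sigma>P: "(`) \<sigma> ` P = P'"
  shows "complex_iso (KV n P) (K_faces n P) (KV n' P') (K_faces n' P')"
proof -
  let ?\<tau> = "inv_into {1..n+1} \<sigma>"
  let ?\<phi> = "map_sum \<sigma> ((`) \<sigma>)" and ?\<psi> = "map_sum ?\<tau> ((`) ?\<tau>)"
  have \<tau>: "bij_betw ?\<tau> {1..n'+1} {1..n+1}" using \<sigma> by (rule bij_betw_inv_into)
  have \<tau>\<sigma>: "?\<tau> ` \<sigma> ` B = B" if "B \<in> P" for B
  proof (rule inv_into_image_cancel[OF bij_betw_imp_inj_on[OF \<sigma>]])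
    show "B \<subseteq> {1..n+1}" using that P by (auto simp: partition_on_def)
  qed
  have "(`) ?\<tau> ` P' = (\<lambda>B. ?\<tau> ` \<sigma> ` B) ` P" by (simp only: \<sigma>P[symmetric] image_image)
  also have "\<dots> = id ` P" by (rule image_cong[OF refl]) (simp only: \<tau>\<sigma> id_apply)
  finally have \<tau>P: "(`) ?\<tau> ` P' = P" by simp
  have \<psi>\<phi>: "?\<psi> (?\<phi> v) = v" if "v \<in> KV n P" for v
    using that \<sigma> \<tau>\<sigma> by (auto simp: KV_def bij_betw_imp_inj_on)
  have \<phi>\<psi>: "?\<phi> (?\<psi> v) = v" if "v \<in> KV n' P'" for v
    using that \<sigma> \<tau>\<sigma> by (auto simp: KV_def \<sigma>P[symmetric] bij_betw_inv_into_right)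
  have "?\<phi> v \<in> KV n' P'" if "v \<in> KV n P" for v
    using that bij_betwE[OF \<sigma>] unfolding KV_def \<sigma>P[symmetric] by auto
  moreover have "?\<psi> v \<in> KV n P" if "v \<in> KV n' P'" for v
    using that bij_betwE[OF \<tau>] unfolding KV_def \<tau>P[symmetric] by auto
  ultimately have bij: "bij_betw ?\<phi> (KV n P) (KV n' P')"
    using \<psi>\<phi> \<phi>\<psi> by (intro bij_betw_byWitness[where f' = ?\<psi>]) auto
  have "(`) ?\<phi> ` K_facets n P = K_facets n' P'"
  proof
    show "(`) ?\<phi> ` K_facets n P \<subseteq> K_facets n' P'" by (rule relabel_facets[OF P \<sigma> \<sigma>P])
    show "K_facets n' P' \<subseteq> (`) ?\<phi> ` K_facets n P"
    proof
      fix S' assume S': "S' \<in> K_facets n' P'"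
      then have "?\<psi> ` S' \<in> K_facets n P" using relabel_facets[OF P' \<tau> \<tau>P] by blast
      moreover have "S' = ?\<phi> ` ?\<psi> ` S'"
        using \<phi>\<psi> K_facets_subset_KV[OF S'] by (force simp: image_image)
      ultimately show "S' \<in> (`) ?\<phi> ` K_facets n P" by blast
    qed
  qed
  then have "(`) ?\<phi> ` K_faces n P = K_faces n' P'"
    unfolding K_faces_def image_downward_closure by simp
  with bij show ?thesis unfolding complex_iso_def by blast
qed

theorem proposition2p9:
  fixes n n' :: nat and P P' :: "nat set set"
  assumes "n \<ge> 2" and "n' \<ge> 2"
    and "partition_on {1..n+1} P" and "partition_on {1..n'+1} P'"
    and "Cox n P \<cong> Cox n' P'"
  shows "complex_iso (KV n P) (K_faces n P) (KV n' P') (K_faces n' P')"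
proof -
  interpret A: block_partition n P using assms(3) by unfold_locales
  interpret A': block_partition n' P' using assms(4) by unfold_locales
  have "card {B \<in> P. card B = k} = card {B \<in> P'. card B = k}" if "2 \<le> k" for k
    using iso_card_max_conj_centralizers_index[OF group_Cox group_Cox assms(5)]
    by (simp add: A.card_blocks_eq_card_max_conj_centralizers[OF that]
        A'.card_blocks_eq_card_max_conj_centralizers[OF that])
  moreover have "card (block_perms n P) = card (block_perms n' P')"
    using iso_same_card[OF assms(5)] by (simp add: A.Cox_carrier A'.Cox_carrier)
  ultimately have "card {B \<in> P. card B = k} = card {B \<in> P'. card B = k}" for k
    using card_blocks_eq_of_card_block_perms_eq A.block_partition_axioms A'.block_partition_axioms
    by blast
  then obtain \<sigma> where "bij_betw \<sigma> {1..n+1} {1..n'+1}" "(`) \<sigma> ` P = P'"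
    using exists_relabeling[OF assms(3,4)] by blast
  then show ?thesis by (rule complex_iso_of_relabeling[OF assms(3,4)])
qed

end
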